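(* For every $(t,h)$, the function $z\mapsto J(t,z,h)$ is strictly convex on $\mathbb{R}_+$.
   Context: Fix constants $T>0$, $r>0$, $\mu\in\mathbb{R}$, $\sigma>0$, $\rho>0$, $m^0\ge 0$, $m^1\ge 0$, $\kappa>0$, $\delta>0$, $\alpha\in(0,1)$, $I>0$ and a number $f(I)>0$. Write $\mathbb{R}_+=(0,\infty)$, $\mathcal{O}=[0,T]\times\mathbb{R}_+^2$, $\theta=(\mu-r)/\sigma$, $g_t=\frac{I}{r}(1-e^{-r(T-t)})$. Let $(\Omega,\mathcal{F},\mathbb{F},\mathbb{P})$ be a complete filtered probability space satisfying the usual conditions, carrying a standard $\mathbb{F}$-Brownian motion $B$. Let $\widehat u(z,h)=(1-\alpha)(z/\alpha)^{\alpha/(\alpha-1)}h$. For $(t,z,h)\in\mathcal{O}$ and $s\in[t,T]$ let $H^2_s=he^{-\delta(s-t)}+\frac{f(I)}{\delta}(1-e^{-\delta(s-t)})$, $M^{H^2}_s=m^0+m^1(H^2_s)^{-\kappa}$, and let $Z^2$ solve $dZ^2_s=(\rho-r+M^{H^2}_s)Z^2_s\,ds-\theta Z^2_s\,dB_s$, $Z^2_t=z$. Define $W(t,z,h)=\mathbb{E}\big[\int_t^T e^{-\int_t^s(\rho+M^{H^2}_u)du}\,\widehat u(Z^2_s,H^2_s)\,ds\big]$. For $s\in[t,T]$ let $H^1_s=he^{-\delta(s-t)}$, $M^{H^1}_s=m^0+m^1(H^1_s)^{-\kappa}$, and let $Z^1$ solve $dZ^1_s=(\rho-r+M^{H^1}_s)Z^1_s\,ds-\theta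 Z^1_s\,dB_s$, $Z^1_t=z$. Define $J(t,z,h)=\sup_{\tau}\mathbb{E}\Big[\int_t^\tau e^{-\int_t^s(\rho+M^{H^1}_u)du}\widehat u(Z^1_s,H^1_s)ds+e^{-\int_t^\tau(\rho+M^{H^1}_u)du}\big(W(\tau,Z^1_\tau,H^1_\tau)-Z^1_\tau g_\tau\big)\Big]$, the supremum over $\mathbb{F}$-stopping times $\tau$ with values in $[t,T]$. *)

theory Defs
  imports "HOL-Probability.Probability"
begin

definition strictly_convex_on :: "real set \<Rightarrow> (real \<Rightarrow> real) \<Rightarrow> bool" where
  "strictly_convex_on S f \<longleftrightarrow> convex S \<and>
     (\<forall>x\<in>S. \<forall>y\<in>S. \<forall>u. x \<noteq> y \<longrightarrow> 0 < u \<longrightarrow> u < 1 \<longrightarrow>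
        f (u * x + (1 - u) * y) < u * f x + (1 - u) * f y)"

text \<open>F is a filtration on M indexed by real times (only t \<ge> 0 matters);
  usual conditions = M complete, F 0 contains all M-null sets (hence all negligible sets),
  and F right-continuous.\<close>
definition usual_filtration :: "'a measure \<Rightarrow> (real \<Rightarrow> 'a measure) \<Rightarrow> bool" where
  "usual_filtration M F \<longleftrightarrow>
     prob_space M \<and> complete_measure M \<and>
     (\<forall>s. space (F s) = space M \<and> sets (F s) \<subseteq> sets M) \<and>
     (\<forall>s u. s \<le> u \<longrightarrow> sets (F s) \<subseteq> sets (F u)) \<and>
     null_sets M \<subseteq> sets (F 0) \<and>
     (\<forall>s\<ge>0. sets (F s) = (\<Inter>u\<in>{s<..}. sets (F u)))"

definition F_brownian_motion :: "'a measure \<Rightarrow> (real \<Rightarrow> 'a measure) \<Rightarrow> (real \<Rightarrow> 'a \<Rightarrow> real) \<Rightarrow> bool" where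
  "F_brownian_motion M F B \<longleftrightarrow>
     (\<forall>s\<ge>0. B s \<in> borel_measurable (F s)) \<and>
     (\<forall>\<omega>\<in>space M. B 0 \<omega> = 0) \<and>
     (\<forall>\<omega>\<in>space M. continuous_on {0..} (\<lambda>s. B s \<omega>)) \<and>
     (\<forall>s u. 0 \<le> s \<longrightarrow> s < u \<longrightarrow>
        distributed M lborel (\<lambda>\<omega>. B u \<omega> - B s \<omega>) (normal_density 0 (sqrt (u - s))) \<and>
        prob_space.indep_set M (sets (F s))
          (sets (vimage_algebra (space M) (\<lambda>\<omega>. B u \<omega> - B s \<omega>) borel)))"

definition uhat :: "real \<Rightarrow> real \<Rightarrow> real \<Rightarrow> real" where
  "uhat \<alpha> z h = (1 - \<alpha>) * (z / \<alpha>) powr (\<alpha> / (\<alpha> - 1)) * h"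

definition gfun :: "real \<Rightarrow> real \<Rightarrow> real \<Rightarrow> real \<Rightarrow> real" where
  "gfun T r I t = I / r * (1 - exp (- r * (T - t)))"

definition mort :: "real \<Rightarrow> real \<Rightarrow> real \<Rightarrow> real \<Rightarrow> real" where
  "mort m0 m1 \<kappa> x = m0 + m1 * x powr (- \<kappa>)"

definition H1 :: "real \<Rightarrow> real \<Rightarrow> real \<Rightarrow> real \<Rightarrow> real" where
  "H1 \<delta> t h s = h * exp (- \<delta> * (s - t))"

definition H2 :: "real \<Rightarrow> real \<Rightarrow> real \<Rightarrow> real \<Rightarrow> real \<Rightarrow> real" where
  "H2 \<delta> fI t h s = h * exp (- \<delta> * (s - t)) + fI / \<delta> * (1 - exp (- \<delta> * (s - t)))"

text \<open>Unique (strong) solution of dZ = (rho - r + Mf s) Z ds - theta Z dB, Z_t = z,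
  for a deterministic continuous coefficient Mf, written in closed form.\<close>
definition Zproc :: "real \<Rightarrow> real \<Rightarrow> real \<Rightarrow> (real \<Rightarrow> real) \<Rightarrow> (real \<Rightarrow> 'a \<Rightarrow> real)
    \<Rightarrow> real \<Rightarrow> real \<Rightarrow> real \<Rightarrow> 'a \<Rightarrow> real" where
  "Zproc \<rho> r \<theta> Mf B t z s \<omega> =
     z * exp (integral {t..s} (\<lambda>u. \<rho> - r + Mf u) - \<theta>\<^sup>2 / 2 * (s - t) - \<theta> * (B s \<omega> - B t \<omega>))"

definition disc :: "real \<Rightarrow> (real \<Rightarrow> real) \<Rightarrow> real \<Rightarrow> real \<Rightarrow> real" where
  "disc \<rho> Mf t s = exp (- integral {t..s} (\<lambda>u. \<rho> + Mf u))"

definition Wfun :: "'a measure \<Rightarrow> (real \<Rightarrow> 'a \<Rightarrow> real) \<Rightarrow> real \<Rightarrow> real \<Rightarrow> real \<Rightarrow> real \<Rightarrow> real \<Rightarrow> real \<Rightarrow> real \<Rightarrow> real \<Rightarrow> real \<Rightarrow> real \<Rightarrow> real \<Rightarrow> real \<Rightarrow> real \<Rightarrow> real \<Rightarrow> real" where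
  "Wfun M B T r \<mu> \<sigma> \<rho> m0 m1 \<kappa> \<delta> \<alpha> fI t z h =
     (let \<theta> = (\<mu> - r) / \<sigma>;
          H = H2 \<delta> fI t h;
          Mf = (\<lambda>u. mort m0 m1 \<kappa> (H u));
          Z = Zproc \<rho> r \<theta> Mf B t z
      in integral\<^sup>L M (\<lambda>\<omega>. integral {t..T} (\<lambda>s. disc \<rho> Mf t s * uhat \<alpha> (Z s \<omega>) (H s))))"

definition stopping_times_in :: "'a measure \<Rightarrow> (real \<Rightarrow> 'a measure) \<Rightarrow> real \<Rightarrow> real \<Rightarrow> ('a \<Rightarrow> real) set" where
  "stopping_times_in M F t T =
     {\<tau>. stopping_time F \<tau> \<and> (\<forall>\<omega>\<in>space M. t \<le> \<tau> \<omega> \<and> \<tau> \<omega> \<le> T)}"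

definition Jfun :: "'a measure \<Rightarrow> (real \<Rightarrow> 'a measure) \<Rightarrow> (real \<Rightarrow> 'a \<Rightarrow> real) \<Rightarrow> real \<Rightarrow> real \<Rightarrow> real \<Rightarrow> real \<Rightarrow> real \<Rightarrow> real \<Rightarrow> real \<Rightarrow> real \<Rightarrow> real \<Rightarrow> real \<Rightarrow> real \<Rightarrow> real \<Rightarrow> real \<Rightarrow> real \<Rightarrow> real \<Rightarrow> real" where
  "Jfun M F B T r \<mu> \<sigma> \<rho> m0 m1 \<kappa> \<delta> \<alpha> I fI t z h =
     (let \<theta> = (\<mu> - r) / \<sigma>;
          H = H1 \<delta> t h;
          Mf = (\<lambda>u. mort m0 m1 \<kappa> (H u));
          Z = Zproc \<rho> r \<theta> Mf B t z
      in SUP \<tau>\<in>stopping_times_in M F t T.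
           integral\<^sup>L M (\<lambda>\<omega>.
             integral {t..\<tau> \<omega>} (\<lambda>s. disc \<rho> Mf t s * uhat \<alpha> (Z s \<omega>) (H s))
             + disc \<rho> Mf t (\<tau> \<omega>) *
                 (Wfun M B T r \<mu> \<sigma> \<rho> m0 m1 \<kappa> \<delta> \<alpha> fI (\<tau> \<omega>) (Z (\<tau> \<omega>) \<omega>) (H (\<tau> \<omega>))
                  - Z (\<tau> \<omega>) \<omega> * gfun T r I (\<tau> \<omega>))))"

end

(*
  Z is linear in its initial value z, while uhat and W are homogeneous in z of degree
  p = alpha / (alpha - 1) < 0. Hence the expected reward of each stopping time is
  z powr p * A - z * b with A, b >= 0 independent of z, and J is the supremum of this family.
  The coefficients A are bounded uniformly in the stopping time, by exponential moments of the
  Brownian motion at bounded stopping times (optional sampling along dyadic approximations),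
  so the supremum is finite. Strict convexity of z powr p survives the supremum because J > 0:
  at a convex combination every member stays below a fixed value strictly under the chord of J.
*)
theory Submission
  imports Defs
begin

section \<open>Strict convexity\<close>

lemma strict_tangent_if_strict_mono_deriv:
  fixes f f' :: "real \<Rightarrow> real"
  assumes S: "convex S" and deriv: "\<And>x. x \<in> S \<Longrightarrow> (f has_real_derivative f' x) (at x)"
    and mono: "strict_mono_on S f'" and m: "m \<in> S" and w: "w \<in> S" "w \<noteq> m"
  shows "f m + f' m * (w - m) < f w"
proof -
  have ivl: "{a..b} \<subseteq> S" if "a \<in> S" "b \<in> S" for a b
    using convex_contains_segment[THEN iffD1, OF S] that closed_segment_eq_real_ivl[of a b]
    by (cases "a \<le> b") auto
  consider "m < w" | "w < m" using w(2) by linarith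
  then show ?thesis
  proof cases
    case 1
    obtain c where c: "m < c" "c < w" "f w - f m = (w - m) * f' c"
      using MVT2[OF 1, of f f'] deriv ivl[OF m w(1)] by (metis atLeastAtMost_iff subsetD)
    have "f' m < f' c" using ivl[OF m w(1)] c by (intro strict_mono_onD[OF mono m]) auto
    then show ?thesis using c 1 mult_strict_left_mono[of "f' m" "f' c" "w - m"] by (simp add: algebra_simps)
  next
    case 2
    obtain c where c: "w < c" "c < m" "f m - f w = (m - w) * f' c"
      using MVT2[OF 2, of f f'] deriv ivl[OF w(1) m] by (metis atLeastAtMost_iff subsetD)
    have "f' c < f' m" using ivl[OF w(1) m] c by (intro strict_mono_onD[OF mono _ m]) auto
    then show ?thesis using c 2 mult_strict_left_mono[of "f' c" "f' m" "m - w"] by (simp add: algebra_simps)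
  qed
qed

lemma strictly_convex_on_if_strict_tangent:
  fixes f f' :: "real \<Rightarrow> real"
  assumes S: "convex S"
    and tangent: "\<And>m w. m \<in> S \<Longrightarrow> w \<in> S \<Longrightarrow> w \<noteq> m \<Longrightarrow> f m + f' m * (w - m) < f w"
  shows "strictly_convex_on S f"
  unfolding strictly_convex_on_def
proof (intro conjI ballI allI impI)
  fix x y u :: real assume x: "x \<in> S" and y: "y \<in> S" and xy: "x \<noteq> y" and u: "0 < u" "u < 1"
  define m where "m = u * x + (1 - u) * y"
  have m: "m \<in> S" unfolding m_def using convexD[OF S x y, of u "1 - u"] u by simp
  have "x - m = (1 - u) * (x - y)" "y - m = - u * (x - y)" unfolding m_def by (simp_all add: algebra_simps)
  then have "x \<noteq> m" "y \<noteq> m" using xy u by auto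
  then have "u * (f m + f' m * (x - m)) + (1 - u) * (f m + f' m * (y - m)) < u * f x + (1 - u) * f y"
    using tangent[OF m x] tangent[OF m y] u by (intro add_strict_mono mult_strict_left_mono) auto
  moreover have "u * (f m + f' m * (x - m)) + (1 - u) * (f m + f' m * (y - m)) = f m"
    unfolding m_def by (simp add: algebra_simps)
  ultimately show "f (u * x + (1 - u) * y) < u * f x + (1 - u) * f y" unfolding m_def by simp
qed (rule S)

lemma strictly_convex_on_powr_neg:
  fixes p :: real
  assumes p: "p < 0"
  shows "strictly_convex_on {0<..} (\<lambda>x. x powr p)"
proof (rule strictly_convex_on_if_strict_tangent)
  have "strict_mono_on {0<..} (\<lambda>x. p * x powr (p - 1))"
    using p by (intro strict_mono_onI mult_strict_left_mono_neg powr_less_mono2_neg) auto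
  then show "m powr p + p * m powr (p - 1) * (w - m) < w powr p"
    if "m \<in> {0<..}" "w \<in> {0<..}" "w \<noteq> m" for m w
    using that by (intro strict_tangent_if_strict_mono_deriv has_real_derivative_powr) auto
qed simp

lemma le_crossing_of_linear_bounds:
  fixes q \<gamma> A R v :: real
  assumes q: "0 < q" and \<gamma>: "0 < \<gamma>" and le: "v \<le> q * A" "v \<le> R - A * \<gamma>"
  shows "v \<le> q * (R / (q + \<gamma>))"
proof (cases "A \<le> R / (q + \<gamma>)")
  case True
  then show ?thesis using le(1) q mult_left_mono[OF True, of q] by linarith
next
  case False
  then have "R / (q + \<gamma>) * \<gamma> \<le> A * \<gamma>" using \<gamma> by (intro mult_right_mono) auto
  moreover have "R - R / (q + \<gamma>) * \<gamma> = q * (R / (q + \<gamma>))" using q \<gamma> by (simp add: field_simps)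
  ultimately show ?thesis using le(2) by linarith
qed

text \<open>At a convex combination \<open>m\<close>, each member lies below \<open>\<phi> m * A\<close> and below its own chord
  minus \<open>A * \<gamma>\<close>, where \<open>\<gamma> > 0\<close> is the convexity gap of \<open>\<phi>\<close>; hence below
  \<open>\<phi> m * R / (\<phi> m + \<gamma>)\<close>, which is strictly less than the chord \<open>R > 0\<close> of the supremum.\<close>
lemma strictly_convex_on_SUP:
  fixes f :: "'i \<Rightarrow> real \<Rightarrow> real" and \<phi> :: "real \<Rightarrow> real"
  assumes \<phi>: "strictly_convex_on {0<..} \<phi>" and \<phi>_pos: "\<And>z. 0 < z \<Longrightarrow> 0 < \<phi> z"
    and S: "S \<noteq> {}"
    and form: "\<And>i. i \<in> S \<Longrightarrow> \<exists>A b. 0 \<le> A \<and> A \<le> C \<and> 0 \<le> b \<and> (\<forall>z>0. f i z = \<phi> z * A - z * b)"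
    and pos: "\<And>z. 0 < z \<Longrightarrow> \<exists>i\<in>S. 0 < f i z"
  shows "strictly_convex_on {0<..} (\<lambda>z. SUP i\<in>S. f i z)"
proof -
  define G where "G z = (SUP i\<in>S. f i z)" for z
  have bounded: "f i z \<le> \<phi> z * C" if z: "0 < z" and i: "i \<in> S" for i z
  proof -
    obtain A b where A: "A \<le> C" "0 \<le> b" and f: "f i z = \<phi> z * A - z * b" using form[OF i] z by blast
    have "f i z \<le> \<phi> z * A" using f z A(2) by simp
    also have "\<dots> \<le> \<phi> z * C" using \<phi>_pos[OF z] A(1) by (simp add: mult_left_mono)
    finally show ?thesis .
  qed
  have upper: "f i z \<le> G z" if "0 < z" "i \<in> S" for i z
    unfolding G_def using bounded[OF that(1)] that(2) by (intro cSUP_upper bdd_aboveI2) auto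
  have G_pos: "0 < G z" if "0 < z" for z
    using pos[OF that] upper[OF that] by fastforce
  show ?thesis unfolding strictly_convex_on_def G_def[symmetric]
  proof (intro conjI ballI allI impI)
    fix x y u :: real assume x: "x \<in> {0<..}" and y: "y \<in> {0<..}" and xy: "x \<noteq> y" and u: "0 < u" "u < 1"
    define m where "m = u * x + (1 - u) * y"
    define \<gamma> where "\<gamma> = u * \<phi> x + (1 - u) * \<phi> y - \<phi> m"
    define R where "R = u * G x + (1 - u) * G y"
    have m0: "0 < m" unfolding m_def using x y u by (simp add: add_pos_pos)
    have q0: "0 < \<phi> m" by (rule \<phi>_pos[OF m0])
    have \<gamma>0: "0 < \<gamma>" using \<phi> x y xy u unfolding strictly_convex_on_def \<gamma>_def m_def by simp
    have R0: "0 < R" unfolding R_def using G_pos x y u by (simp add: add_pos_pos)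
    have "f i m \<le> \<phi> m * (R / (\<phi> m + \<gamma>))" if i: "i \<in> S" for i
    proof -
      obtain A b where A: "0 \<le> A" "0 \<le> b" and f: "\<forall>z>0. f i z = \<phi> z * A - z * b"
        using form[OF i] by blast
      have fm: "f i m = \<phi> m * A - m * b" and fx: "f i x = \<phi> x * A - x * b"
        and fy: "f i y = \<phi> y * A - y * b" using f x y m0 by auto
      have "f i m = u * f i x + (1 - u) * f i y - A * \<gamma>"
        unfolding fm fx fy \<gamma>_def by (simp add: m_def algebra_simps)
      also have "u * f i x + (1 - u) * f i y \<le> R"
        unfolding R_def using upper[OF _ i] x y u by (intro add_mono mult_left_mono) auto
      finally have chord: "f i m \<le> R - A * \<gamma>" by simp
      have at_m: "f i m \<le> \<phi> m * A" using f m0 A by simp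
      show ?thesis using q0 \<gamma>0 at_m chord by (rule le_crossing_of_linear_bounds)
    qed
    then have "G m \<le> \<phi> m * (R / (\<phi> m + \<gamma>))" unfolding G_def using S by (intro cSUP_least) auto
    also have "\<dots> < R" using q0 \<gamma>0 R0 by (simp add: field_simps)
    finally show "G (u * x + (1 - u) * y) < u * G x + (1 - u) * G y" unfolding m_def R_def .
  qed simp
qed

section \<open>Integration and measurability\<close>

lemma integral_nonneg_unconditional:
  fixes g :: "'n::euclidean_space \<Rightarrow> real"
  assumes "\<And>x. x \<in> S \<Longrightarrow> 0 \<le> g x"
  shows "0 \<le> integral S g"
  using assms by (cases "g integrable_on S") (auto intro: integral_nonneg simp: not_integrable_integral)

text \<open>Measurability of \<open>X\<close> is not assumed: if the combination were integrable, \<open>X\<close> would be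
  measurable, hence integrable by domination, and then so would be \<open>Y\<close>. So in the
  non-integrable case all integrals vanish and \<open>A = b = 0\<close> works.\<close>
lemma (in prob_space) integral_diff_scaled_eq:
  fixes X Xb Y :: "'a \<Rightarrow> real"
  assumes X: "\<And>\<omega>. \<omega> \<in> space M \<Longrightarrow> 0 \<le> X \<omega> \<and> X \<omega> \<le> Xb \<omega>" and Xb: "integrable M Xb"
    and Y: "Y \<in> borel_measurable M" "\<And>\<omega>. \<omega> \<in> space M \<Longrightarrow> 0 \<le> Y \<omega>"
  obtains A b where "0 \<le> A" "A \<le> integral\<^sup>L M Xb" "0 \<le> b"
    "\<And>a z. 0 < a \<Longrightarrow> 0 < z \<Longrightarrow> (\<integral>\<omega>. a * X \<omega> - z * Y \<omega> \<partial>M) = a * A - z * b"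
proof (cases "integrable M X \<and> integrable M Y")
  case True
  show ?thesis
  proof (rule that)
    show "0 \<le> integral\<^sup>L M X" "0 \<le> integral\<^sup>L M Y" using X Y(2) by auto
    show "integral\<^sup>L M X \<le> integral\<^sup>L M Xb" using True Xb X by (intro integral_mono) auto
  qed (use True in simp)
next
  case False
  have "\<not> integrable M (\<lambda>\<omega>. a * X \<omega> - z * Y \<omega>)" if az: "0 < a" "0 < z" for a z
  proof
    assume int: "integrable M (\<lambda>\<omega>. a * X \<omega> - z * Y \<omega>)"
    have "(\<lambda>\<omega>. ((a * X \<omega> - z * Y \<omega>) + z * Y \<omega>) / a) \<in> borel_measurable M"
      using borel_measurable_integrable[OF int] Y(1) by measurable
    then have "X \<in> borel_measurable M" using az by simp
    then have X_int: "integrable M X"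
      by (rule Bochner_Integration.integrable_bound[OF Xb]) (use X in force)
    have "integrable M (\<lambda>\<omega>. a * X \<omega> - (a * X \<omega> - z * Y \<omega>))"
      by (intro Bochner_Integration.integrable_diff integrable_mult_right X_int int)
    then have "integrable M Y" using az by simp
    then show False using False X_int by simp
  qed
  moreover have "0 \<le> integral\<^sup>L M Xb"
    using X by (intro Bochner_Integration.integral_nonneg) (meson order_trans)
  ultimately show ?thesis by (intro that[of 0 0]) (auto simp: not_integrable_integral_eq)
qed

lemma integral_const_plus_nonneg_ge:
  fixes g :: "real \<Rightarrow> real"
  assumes "a \<le> s" "s - a \<le> L" "\<And>v. 0 \<le> g v"
  shows "- \<bar>c\<bar> * L \<le> integral {a..s} (\<lambda>v. c + g v)"
proof (cases "(\<lambda>v. c + g v) integrable_on {a..s}")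
  case True
  have c: "(\<lambda>v. c) integrable_on {a..s}" by (intro integrable_continuous_real continuous_intros)
  then have "g integrable_on {a..s}" using integrable_diff[OF True c] by simp
  then have "integral {a..s} (\<lambda>v. c + g v) = integral {a..s} (\<lambda>v. c) + integral {a..s} g"
    by (rule integral_add[OF c])
  also have "integral {a..s} (\<lambda>v. c) = c * (s - a)" using assms(1) by simp
  finally have "integral {a..s} (\<lambda>v. c + g v) = c * (s - a) + integral {a..s} g" .
  moreover have "0 \<le> integral {a..s} g" using assms(3) by (rule integral_nonneg_unconditional)
  moreover have "- \<bar>c\<bar> * L \<le> - \<bar>c\<bar> * (s - a)" using assms by (simp add: mult_left_mono)
  moreover have "- \<bar>c\<bar> * (s - a) \<le> c * (s - a)" using assms(1) by (intro mult_right_mono) auto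
  ultimately show ?thesis by linarith
qed (use assms in \<open>simp add: not_integrable_integral\<close>)

lemma continuous_on_integral_Icc:
  fixes g :: "real \<Rightarrow> real"
  assumes "continuous_on {a..b} g"
  shows "continuous_on {a..b} (\<lambda>s. integral {a..s} g)"
  using assms by (intro indefinite_integral_continuous_1 integrable_continuous_interval)

lemma measurable_continuous_on_compose:
  fixes g :: "real \<Rightarrow> real"
  assumes g: "continuous_on {a..b} g" and \<tau>: "\<tau> \<in> borel_measurable M"
    and range: "\<And>\<omega>. \<omega> \<in> space M \<Longrightarrow> \<tau> \<omega> \<in> {a..b}"
  shows "(\<lambda>\<omega>. g (\<tau> \<omega>)) \<in> borel_measurable M"
proof -
  have "(\<lambda>\<omega>. indicator {a..b} (\<tau> \<omega>) *\<^sub>R g (\<tau> \<omega>)) \<in> borel_measurable M"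
    using measurable_compose[OF \<tau> borel_measurable_continuous_on_indicator[OF _ g]] by simp
  then show ?thesis by (rule measurable_cong[THEN iffD1, rotated]) (use range in auto)
qed

section \<open>Brownian motion on a filtered probability space\<close>

lemma normal_density_mult_exp:
  fixes \<sigma> l x :: real
  assumes "0 < \<sigma>"
  shows "normal_density 0 \<sigma> x * exp (l * x) = exp (l\<^sup>2 * \<sigma>\<^sup>2 / 2) * normal_density (l * \<sigma>\<^sup>2) \<sigma> x"
proof -
  have "- (x - 0)\<^sup>2 / (2 * \<sigma>\<^sup>2) + l * x = l\<^sup>2 * \<sigma>\<^sup>2 / 2 + (- (x - l * \<sigma>\<^sup>2)\<^sup>2 / (2 * \<sigma>\<^sup>2))"
    using assms by (simp add: field_simps power2_eq_square)
  then have "exp (- (x - 0)\<^sup>2 / (2 * \<sigma>\<^sup>2)) * exp (l * x) = exp (l\<^sup>2 * \<sigma>\<^sup>2 / 2) * exp (- (x - l * \<sigma>\<^sup>2)\<^sup>2 / (2 * \<sigma>\<^sup>2))"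
    by (metis exp_add)
  then show ?thesis unfolding normal_density_def by (metis (no_types, lifting) mult.assoc mult.left_commute)
qed

lemma nn_integral_normal_density:
  assumes "0 < \<sigma>"
  shows "(\<integral>\<^sup>+x. ennreal (normal_density m \<sigma> x) \<partial>lborel) = 1"
proof -
  interpret prob_space "density lborel (\<lambda>x. ennreal (normal_density m \<sigma> x))"
    using prob_space_normal_density[OF assms] .
  show ?thesis using emeasure_space_1 by (simp add: emeasure_density)
qed

lemma dyadic_ceiling_tendsto: "(\<lambda>n. real_of_int \<lceil>x * 2 ^ n\<rceil> / 2 ^ n) \<longlonglongrightarrow> (x :: real)"
proof (rule tendsto_sandwich[of "\<lambda>n. x" _ _ "\<lambda>n. x + (1 / 2) ^ n"])
  show "\<forall>\<^sub>F n in sequentially. x \<le> real_of_int \<lceil>x * 2 ^ n\<rceil> / 2 ^ n"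
    by (intro always_eventually allI) (simp add: field_simps)
  have "real_of_int \<lceil>x * 2 ^ n\<rceil> \<le> x * 2 ^ n + 1" for n :: nat by linarith
  then show "\<forall>\<^sub>F n in sequentially. real_of_int \<lceil>x * 2 ^ n\<rceil> / 2 ^ n \<le> x + (1 / 2) ^ n"
    by (intro always_eventually allI) (simp add: field_simps)
  show "(\<lambda>n. x + (1 / 2) ^ n) \<longlonglongrightarrow> x"
    using tendsto_add[OF tendsto_const LIMSEQ_realpow_zero[of "1 / 2"]] by simp
qed simp

definition dyadic_upper :: "nat \<Rightarrow> real \<Rightarrow> real \<Rightarrow> real" where
  "dyadic_upper n t x = t + real_of_int \<lceil>(x - t) * 2 ^ n\<rceil> / 2 ^ n"

lemma dyadic_upper_ge: "x \<le> dyadic_upper n t x"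
  unfolding dyadic_upper_def by (simp add: field_simps) linarith

lemma dyadic_upper_tendsto: "(\<lambda>n. dyadic_upper n t x) \<longlonglongrightarrow> x"
  using tendsto_add[OF tendsto_const dyadic_ceiling_tendsto[of "x - t"], of t]
  unfolding dyadic_upper_def by simp

lemma ceiling_mult_eq_iff:
  fixes x t q :: real
  assumes q: "0 < q"
  shows "\<lceil>(x - t) * q\<rceil> = int k \<longleftrightarrow> x \<le> t + real k / q \<and> \<not> x \<le> t + real k / q - 1 / q"
proof -
  have "(x - t) * q \<le> real k \<longleftrightarrow> x \<le> t + real k / q" using q by (simp add: field_simps)
  moreover have "t + real k / q - 1 / q = t + (real k - 1) / q" by (simp add: diff_divide_distrib)
  moreover have "(real k - 1) / q < x - t \<longleftrightarrow> real k - 1 < (x - t) * q"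
    using q by (simp add: pos_divide_less_eq)
  ultimately show ?thesis by (auto simp: ceiling_eq_iff)
qed

locale filtered_brownian_motion =
  fixes M :: "'a measure" and F :: "real \<Rightarrow> 'a measure" and B :: "real \<Rightarrow> 'a \<Rightarrow> real"
  assumes usual_filtration: "usual_filtration M F" and brownian: "F_brownian_motion M F B"
begin

sublocale prob_space M
  using usual_filtration unfolding usual_filtration_def by auto

sublocale filtration "space M" F
  using usual_filtration unfolding usual_filtration_def by unfold_locales auto

lemma sets_F_subset: "sets (F s) \<subseteq> sets M"
  using usual_filtration unfolding usual_filtration_def by auto

lemma subalgebra_F: "subalgebra M (F s)"
  using sets_F_subset unfolding subalgebra_def by (simp add: space_F)

lemma measurable_B_F:
  assumes "0 \<le> s" "s \<le> u"
  shows "B s \<in> borel_measurable (F u)"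
proof -
  have "subalgebra (F u) (F s)" using sets_F_mono[OF assms(2)] by (simp add: subalgebra_def space_F)
  moreover have "B s \<in> borel_measurable (F s)" using brownian assms(1) unfolding F_brownian_motion_def by blast
  ultimately show ?thesis by (rule measurable_from_subalg)
qed

lemma measurable_B [measurable]: "0 \<le> s \<Longrightarrow> B s \<in> borel_measurable M"
  using measurable_from_subalg[OF subalgebra_F measurable_B_F] by auto

lemma continuous_on_B: "\<omega> \<in> space M \<Longrightarrow> continuous_on {0..} (\<lambda>s. B s \<omega>)"
  using brownian unfolding F_brownian_motion_def by auto

lemma continuous_on_B_Icc: "0 \<le> a \<Longrightarrow> \<omega> \<in> space M \<Longrightarrow> continuous_on {a..b} (\<lambda>s. B s \<omega>)"
  using continuous_on_subset[OF continuous_on_B] by auto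

lemma nn_integral_exp_increment:
  assumes "0 \<le> s" "s \<le> u"
  shows "(\<integral>\<^sup>+\<omega>. ennreal (exp (l * (B u \<omega> - B s \<omega>))) \<partial>M) = ennreal (exp (l\<^sup>2 * (u - s) / 2))"
proof (cases "s = u")
  case False
  define \<sigma> where "\<sigma> = sqrt (u - s)"
  have \<sigma>: "0 < \<sigma>" "\<sigma>\<^sup>2 = u - s" using assms False unfolding \<sigma>_def by auto
  have "distributed M lborel (\<lambda>\<omega>. B u \<omega> - B s \<omega>) (normal_density 0 \<sigma>)"
    using brownian assms False unfolding F_brownian_motion_def \<sigma>_def by auto
  then have "(\<integral>\<^sup>+\<omega>. ennreal (exp (l * (B u \<omega> - B s \<omega>))) \<partial>M)
      = (\<integral>\<^sup>+x. ennreal (normal_density 0 \<sigma> x) * ennreal (exp (l * x)) \<partial>lborel)"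
    using distributed_nn_integral[of M lborel _ _ "\<lambda>x. ennreal (exp (l * x))"] by simp
  also have "\<dots> = (\<integral>\<^sup>+x. ennreal (exp (l\<^sup>2 * \<sigma>\<^sup>2 / 2)) * ennreal (normal_density (l * \<sigma>\<^sup>2) \<sigma> x) \<partial>lborel)"
    by (intro nn_integral_cong)
      (simp add: normal_density_mult_exp[OF \<sigma>(1)] ennreal_mult'[symmetric])
  also have "\<dots> = ennreal (exp (l\<^sup>2 * (u - s) / 2))"
    using nn_integral_normal_density[OF \<sigma>(1)] \<sigma>(2) by (simp add: nn_integral_cmult)
  finally show ?thesis .
qed (simp add: emeasure_space_1)

lemma nn_integral_mult_indep_increment:
  assumes su: "0 \<le> s" "s < u" and U: "U \<in> borel_measurable (F s)" "\<And>\<omega>. 0 \<le> U \<omega>"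
    and \<phi>: "\<phi> \<in> borel_measurable borel" "\<And>x. 0 \<le> \<phi> x"
  shows "(\<integral>\<^sup>+\<omega>. ennreal (U \<omega> * \<phi> (B u \<omega> - B s \<omega>)) \<partial>M)
       = (\<integral>\<^sup>+\<omega>. ennreal (U \<omega>) \<partial>M) * (\<integral>\<^sup>+\<omega>. ennreal (\<phi> (B u \<omega> - B s \<omega>)) \<partial>M)"
proof -
  define W where "W = (\<lambda>\<omega>. \<phi> (B u \<omega> - B s \<omega>))"
  define V where "V = vimage_algebra (space M) (\<lambda>\<omega>. B u \<omega> - B s \<omega>) borel"
  have indep: "indep_set (sets (F s)) (sets V)"
    using brownian su unfolding F_brownian_motion_def V_def by auto
  have Um: "U \<in> borel_measurable M" using measurable_from_subalg[OF subalgebra_F U(1)] .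
  have Wv: "W \<in> borel_measurable V" unfolding W_def V_def
    by (rule measurable_compose[OF measurable_vimage_algebra1 \<phi>(1)]) simp
  have "B u \<in> borel_measurable M" "B s \<in> borel_measurable M" using su by auto
  then have Wm: "W \<in> borel_measurable M" unfolding W_def using \<phi>(1) by measurable
  have sub1: "sigma_sets (space M) {U -` A \<inter> space M |A. A \<in> sets borel} \<subseteq> sets (F s)"
    using sets.sigma_sets_subset[of "{U -` A \<inter> space M |A. A \<in> sets borel}" "F s"] space_F[of s]
      measurable_sets[OF U(1)] by auto
  have sub2: "sigma_sets (space M) {W -` A \<inter> space M |A. A \<in> sets borel} \<subseteq> sets V"
    using sets.sigma_sets_subset[of "{W -` A \<inter> space M |A. A \<in> sets borel}" V]
      measurable_sets[OF Wv] by (auto simp: V_def)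
  have "indep_set (sigma_sets (space M) {U -` A \<inter> space M |A. A \<in> sets borel})
      (sigma_sets (space M) {W -` A \<inter> space M |A. A \<in> sets borel})"
    unfolding indep_set_def
    by (rule indep_sets_mono_sets[OF indep[unfolded indep_set_def]]) (use sub1 sub2 in \<open>auto split: bool.split\<close>)
  then have "indep_var borel U borel W" using Um Wm by (subst indep_var_eq) auto
  from indep_var_compose[OF this, of ennreal borel ennreal borel]
  have "indep_var borel (\<lambda>\<omega>. ennreal (U \<omega>)) borel (\<lambda>\<omega>. ennreal (W \<omega>))" by (simp add: comp_def)
  then have iv: "indep_vars (\<lambda>_. borel) (case_bool (\<lambda>\<omega>. ennreal (U \<omega>)) (\<lambda>\<omega>. ennreal (W \<omega>))) UNIV"
    unfolding indep_var_def by (rule indep_vars_cong[THEN iffD1, rotated 3]) (auto split: bool.split)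
  have "(\<integral>\<^sup>+\<omega>. (\<Prod>i\<in>UNIV. case_bool (\<lambda>\<omega>. ennreal (U \<omega>)) (\<lambda>\<omega>. ennreal (W \<omega>)) i \<omega>) \<partial>M)
      = (\<Prod>i\<in>UNIV. \<integral>\<^sup>+\<omega>. case_bool (\<lambda>\<omega>. ennreal (U \<omega>)) (\<lambda>\<omega>. ennreal (W \<omega>)) i \<omega> \<partial>M)"
    by (rule indep_vars_nn_integral[OF _ iv]) auto
  then show ?thesis using U(2) \<phi>(2) by (simp add: UNIV_bool W_def mult.commute ennreal_mult)
qed

text \<open>Joint measurability in \<open>(\<omega>, s)\<close>, by discretising time dyadically and using path
  continuity; \<open>max 0\<close> extends the process constantly to negative times.\<close>
lemma measurable_B_pair: "(\<lambda>x. B (max 0 (snd x)) (fst x)) \<in> borel_measurable (M \<Otimes>\<^sub>M lborel)"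
proof (rule borel_measurable_LIMSEQ_real)
  define g where "g n s = max 0 (real_of_int \<lceil>s * 2 ^ n\<rceil> / 2 ^ n)" for n :: nat and s :: real
  show "(\<lambda>x. B (g n (snd x)) (fst x)) \<in> borel_measurable (M \<Otimes>\<^sub>M lborel)" for n
  proof -
    let ?I = "range (\<lambda>k::int. max 0 (real_of_int k / 2 ^ n))"
    have I: "countable ?I" by simp
    have gm: "(\<lambda>x. g n (snd x)) \<in> borel_measurable (M \<Otimes>\<^sub>M lborel)"
      unfolding g_def by measurable
    have "(\<lambda>x. g n (snd x)) \<in> measurable (M \<Otimes>\<^sub>M lborel) (count_space ?I)"
      unfolding measurable_count_space_eq_countable[OF I]
    proof (intro conjI ballI)
      show "(\<lambda>x. g n (snd x)) \<in> space (M \<Otimes>\<^sub>M lborel) \<rightarrow> ?I" unfolding g_def by auto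
      show "(\<lambda>x. g n (snd x)) -` {i} \<inter> space (M \<Otimes>\<^sub>M lborel) \<in> sets (M \<Otimes>\<^sub>M lborel)" for i
        by (rule measurable_sets[OF gm]) simp
    qed
    moreover have "(\<lambda>x. B i (fst x)) \<in> borel_measurable (M \<Otimes>\<^sub>M lborel)" if "i \<in> ?I" for i
    proof -
      have "0 \<le> i" using that by auto
      then show ?thesis using measurable_B measurable_fst'' by blast
    qed
    ultimately show ?thesis
      by (intro measurable_compose_countable'[OF _ _ I, where f="\<lambda>i x. B i (fst x)" and g="\<lambda>x. g n (snd x)"])
  qed
  fix x :: "'a \<times> real" assume "x \<in> space (M \<Otimes>\<^sub>M lborel)"
  then have x: "fst x \<in> space M" by (auto simp: space_pair_measure)
  have "(\<lambda>n. g n (snd x)) \<longlonglongrightarrow> max 0 (snd x)"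
    unfolding g_def by (intro tendsto_max tendsto_const dyadic_ceiling_tendsto)
  then show "(\<lambda>n. B (g n (snd x)) (fst x)) \<longlonglongrightarrow> B (max 0 (snd x)) (fst x)"
    by (rule continuous_on_tendsto_compose[OF continuous_on_B[OF x]]) (auto simp: g_def)
qed

lemma measurable_B_at:
  assumes "\<tau> \<in> borel_measurable M" "\<And>\<omega>. \<omega> \<in> space M \<Longrightarrow> 0 \<le> \<tau> \<omega>"
  shows "(\<lambda>\<omega>. B (\<tau> \<omega>) \<omega>) \<in> borel_measurable M"
proof -
  have "(\<lambda>\<omega>. (\<omega>, \<tau> \<omega>)) \<in> measurable M (M \<Otimes>\<^sub>M lborel)"
    using assms(1) by (intro measurable_Pair) auto
  from measurable_compose[OF this measurable_B_pair]
  have "(\<lambda>\<omega>. B (max 0 (\<tau> \<omega>)) \<omega>) \<in> borel_measurable M" by simp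
  then show ?thesis by (rule measurable_cong[THEN iffD1, rotated]) (use assms(2) in auto)
qed

lemma integral_exp_path_eq_lborel:
  assumes "0 \<le> a" "continuous_on {a..b} k" "\<omega> \<in> space M"
  shows "integral {a..b} (\<lambda>s. k s * exp (l * (B s \<omega> - B a \<omega>)))
       = (\<integral>s. indicator {a..b} s *\<^sub>R (k s * exp (l * (B (max 0 s) \<omega> - B a \<omega>))) \<partial>lborel)"
    and "integrable lborel (\<lambda>s. indicator {a..b} s *\<^sub>R (k s * exp (l * (B (max 0 s) \<omega> - B a \<omega>))))"
proof -
  let ?f = "\<lambda>s. k s * exp (l * (B (max 0 s) \<omega> - B a \<omega>))"
  have "continuous_on {a..b} (\<lambda>s. B (max 0 s) \<omega>)"
    using continuous_on_B_Icc[OF assms(1,3)] by (rule continuous_on_cong[THEN iffD1, rotated 2]) (use assms in auto)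
  then have "continuous_on {a..b} ?f" by (intro continuous_intros assms)
  then show int: "integrable lborel (\<lambda>s. indicator {a..b} s *\<^sub>R ?f s)"
    by (rule borel_integrable_compact[OF compact_Icc])
  have "integral {a..b} (\<lambda>s. k s * exp (l * (B s \<omega> - B a \<omega>))) = integral {a..b} ?f"
    by (rule integral_cong) (use assms in auto)
  also have "\<dots> = (LINT s : {a..b} | lborel. ?f s)"
    using set_borel_integral_eq_integral(2)[of "{a..b}" ?f] int unfolding set_integrable_def by simp
  finally show "integral {a..b} (\<lambda>s. k s * exp (l * (B s \<omega> - B a \<omega>))) = (\<integral>s. indicator {a..b} s *\<^sub>R ?f s \<partial>lborel)"
    unfolding set_lebesgue_integral_def .
qed

lemma measurable_integral_exp_path:
  assumes "0 \<le> a" "continuous_on {a..b} k"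
  shows "(\<lambda>\<omega>. integral {a..b} (\<lambda>s. k s * exp (l * (B s \<omega> - B a \<omega>)))) \<in> borel_measurable M"
proof -
  have "(\<lambda>s. indicator {a..b} s *\<^sub>R k s) \<in> borel_measurable borel"
    by (rule borel_measurable_continuous_on_indicator[OF _ assms(2)]) simp
  then have "(\<lambda>x::'a \<times> real. indicator {a..b} (snd x) *\<^sub>R k (snd x)) \<in> borel_measurable (M \<Otimes>\<^sub>M lborel)"
    by (intro measurable_compose[OF measurable_snd]) simp
  then have "(\<lambda>x::'a \<times> real. (indicator {a..b} (snd x) *\<^sub>R k (snd x)) * exp (l * (B (max 0 (snd x)) (fst x) - B a (fst x))))
      \<in> borel_measurable (M \<Otimes>\<^sub>M lborel)"
    using assms(1) measurable_B_pair by measurable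
  then have "(\<lambda>(\<omega>, s). indicator {a..b} s *\<^sub>R (k s * exp (l * (B (max 0 s) \<omega> - B a \<omega>)))) \<in> borel_measurable (M \<Otimes>\<^sub>M lborel)"
    by (rule measurable_cong[THEN iffD1, rotated]) (auto simp: indicator_def)
  from sigma_finite_measure.borel_measurable_lebesgue_integral[OF sigma_finite_lborel this]
  show ?thesis
    by (rule measurable_cong[THEN iffD1, rotated]) (use integral_exp_path_eq_lborel(1)[OF assms] in auto)
qed

lemma nn_integral_integral_exp_path_le:
  assumes "0 \<le> a" "a \<le> b"
  shows "(\<integral>\<^sup>+\<omega>. ennreal (integral {a..b} (\<lambda>s. exp (l * (B s \<omega> - B a \<omega>)))) \<partial>M)
    \<le> ennreal ((b - a) * exp (l\<^sup>2 * (b - a) / 2))"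
proof -
  define G where "G \<omega> s = ennreal (indicator {a..b} s * exp (l * (B (max 0 s) \<omega> - B a \<omega>)))" for \<omega> s
  have pt: "ennreal (integral {a..b} (\<lambda>s. exp (l * (B s \<omega> - B a \<omega>)))) = (\<integral>\<^sup>+s. G \<omega> s \<partial>lborel)"
    if "\<omega> \<in> space M" for \<omega>
  proof -
    have k: "continuous_on {a..b} (\<lambda>s. 1 :: real)" by simp
    have "integral {a..b} (\<lambda>s. exp (l * (B s \<omega> - B a \<omega>)))
        = (\<integral>s. indicator {a..b} s * exp (l * (B (max 0 s) \<omega> - B a \<omega>)) \<partial>lborel)"
      "integrable lborel (\<lambda>s. indicator {a..b} s * exp (l * (B (max 0 s) \<omega> - B a \<omega>)))"
      using integral_exp_path_eq_lborel[OF assms(1) k that, of l] by simp_all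
    then show ?thesis by (simp add: G_def nn_integral_eq_integral)
  qed
  have G: "(\<lambda>(\<omega>, s). G \<omega> s) \<in> borel_measurable (M \<Otimes>\<^sub>M lborel)"
    unfolding G_def case_prod_beta' using assms(1) measurable_B_pair by measurable
  have "(\<integral>\<^sup>+\<omega>. ennreal (integral {a..b} (\<lambda>s. exp (l * (B s \<omega> - B a \<omega>)))) \<partial>M)
      = (\<integral>\<^sup>+\<omega>. (\<integral>\<^sup>+s. G \<omega> s \<partial>lborel) \<partial>M)"
    using pt by (rule nn_integral_cong)
  also from G have "\<dots> = (\<integral>\<^sup>+s. (\<integral>\<^sup>+\<omega>. G \<omega> s \<partial>M) \<partial>lborel)"
    using pair_sigma_finite.Fubini'[of M lborel G]
    by (simp add: pair_sigma_finite_def prob_space_axioms prob_space_imp_sigma_finite sigma_finite_lborel)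
  also have "\<dots> \<le> (\<integral>\<^sup>+s. ennreal (exp (l\<^sup>2 * (b - a) / 2)) * indicator {a..b} s \<partial>lborel)"
  proof (rule nn_integral_mono)
    fix s :: real
    show "(\<integral>\<^sup>+\<omega>. G \<omega> s \<partial>M) \<le> ennreal (exp (l\<^sup>2 * (b - a) / 2)) * indicator {a..b} s"
    proof (cases "s \<in> {a..b}")
      case True
      then have "(\<integral>\<^sup>+\<omega>. G \<omega> s \<partial>M) = ennreal (exp (l\<^sup>2 * (s - a) / 2))"
        using assms nn_integral_exp_increment[of a s l] by (simp add: G_def max_def)
      also have "\<dots> \<le> ennreal (exp (l\<^sup>2 * (b - a) / 2))"
        using True by (intro ennreal_leI) (auto intro!: mult_left_mono divide_right_mono)
      finally show ?thesis using True by simp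
    qed (simp add: G_def)
  qed
  also have "\<dots> = ennreal (exp (l\<^sup>2 * (b - a) / 2)) * ennreal (b - a)"
    using assms by (simp add: nn_integral_cmult_indicator)
  also have "\<dots> = ennreal ((b - a) * exp (l\<^sup>2 * (b - a) / 2))"
    using assms by (simp add: ennreal_mult'[symmetric] mult.commute)
  finally show ?thesis .
qed

lemma integrable_integral_exp_path:
  assumes "0 \<le> a" "a \<le> b"
  shows "integrable M (\<lambda>\<omega>. integral {a..b} (\<lambda>s. exp (l * (B s \<omega> - B a \<omega>))))"
    and "(\<integral>\<omega>. integral {a..b} (\<lambda>s. exp (l * (B s \<omega> - B a \<omega>))) \<partial>M) \<le> (b - a) * exp (l\<^sup>2 * (b - a) / 2)"
proof -
  have m: "(\<lambda>\<omega>. integral {a..b} (\<lambda>s. exp (l * (B s \<omega> - B a \<omega>)))) \<in> borel_measurable M"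
    using measurable_integral_exp_path[OF assms(1) continuous_on_const, of b 1 l] by simp
  have nn: "0 \<le> integral {a..b} (\<lambda>s. exp (l * (B s \<omega> - B a \<omega>)))" for \<omega>
    by (rule integral_nonneg_unconditional) simp
  show int: "integrable M (\<lambda>\<omega>. integral {a..b} (\<lambda>s. exp (l * (B s \<omega> - B a \<omega>))))"
    using nn_integral_integral_exp_path_le[OF assms, of l] nn
    by (intro integrableI_bounded[OF m]) (auto simp: order_le_less_trans)
  have "ennreal (\<integral>\<omega>. integral {a..b} (\<lambda>s. exp (l * (B s \<omega> - B a \<omega>))) \<partial>M) \<le> ennreal ((b - a) * exp (l\<^sup>2 * (b - a) / 2))"
    using nn_integral_integral_exp_path_le[OF assms, of l] by (subst nn_integral_eq_integral[OF int, symmetric]) (auto simp: nn)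
  then show "(\<integral>\<omega>. integral {a..b} (\<lambda>s. exp (l * (B s \<omega> - B a \<omega>))) \<partial>M) \<le> (b - a) * exp (l\<^sup>2 * (b - a) / 2)"
    using assms by (subst (asm) ennreal_le_iff) auto
qed

lemma measurable_stopping_time_M: "stopping_time F \<tau> \<Longrightarrow> \<tau> \<in> borel_measurable M"
  using measurable_stopping_time sets_F_subset space_F by blast

text \<open>\<open>B u - B s\<close> is independent of \<open>F s\<close> and \<open>E exp (l * (B u - B s)) \<ge> 1\<close>.\<close>
lemma nn_integral_exp_increment_on_event_le:
  assumes "0 \<le> t" "t \<le> s" "s \<le> u" and A: "A \<in> sets (F s)"
  shows "(\<integral>\<^sup>+\<omega>. indicator A \<omega> * ennreal (exp (l * (B s \<omega> - B t \<omega>))) \<partial>M)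
    \<le> (\<integral>\<^sup>+\<omega>. indicator A \<omega> * ennreal (exp (l * (B u \<omega> - B t \<omega>))) \<partial>M)"
proof (cases "s = u")
  case False
  define U where "U \<omega> = indicator A \<omega> * exp (l * (B s \<omega> - B t \<omega>))" for \<omega>
  have "B s \<in> borel_measurable (F s)" "B t \<in> borel_measurable (F s)"
    using assms by (auto intro: measurable_B_F)
  then have U: "U \<in> borel_measurable (F s)" unfolding U_def using A by measurable
  have "1 \<le> (\<integral>\<^sup>+\<omega>. ennreal (exp (l * (B u \<omega> - B s \<omega>))) \<partial>M)"
    using assms by (simp add: nn_integral_exp_increment)
  then have "(\<integral>\<^sup>+\<omega>. ennreal (U \<omega>) \<partial>M)
      \<le> (\<integral>\<^sup>+\<omega>. ennreal (U \<omega>) \<partial>M) * (\<integral>\<^sup>+\<omega>. ennreal (exp (l * (B u \<omega> - B s \<omega>))) \<partial>M)"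
    by (metis mult.right_neutral mult_left_mono zero_le)
  also have "\<dots> = (\<integral>\<^sup>+\<omega>. ennreal (U \<omega> * exp (l * (B u \<omega> - B s \<omega>))) \<partial>M)"
    by (intro nn_integral_mult_indep_increment[symmetric] U) (use assms False in \<open>auto simp: U_def\<close>)
  also have "\<dots> = (\<integral>\<^sup>+\<omega>. indicator A \<omega> * ennreal (exp (l * (B u \<omega> - B t \<omega>))) \<partial>M)"
    by (intro nn_integral_cong) (simp add: U_def indicator_def flip: exp_add, simp add: algebra_simps)
  finally show ?thesis by (simp add: U_def indicator_mult_ennreal mult.commute)
qed simp

text \<open>Optional sampling for the submartingale \<open>exp (l * (B s - B t))\<close>, for stopping times
  with finitely many values.\<close>
lemma nn_integral_exp_finite_valued_le:
  assumes t: "0 \<le> t" and K: "finite K" "\<And>k. k \<in> K \<Longrightarrow> t \<le> k \<and> k \<le> u"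
    and \<sigma>: "\<And>\<omega>. \<omega> \<in> space M \<Longrightarrow> \<sigma> \<omega> \<in> K" "\<And>k. k \<in> K \<Longrightarrow> {\<omega> \<in> space M. \<sigma> \<omega> = k} \<in> sets (F k)"
  shows "(\<integral>\<^sup>+\<omega>. ennreal (exp (l * (B (\<sigma> \<omega>) \<omega> - B t \<omega>))) \<partial>M) \<le> ennreal (exp (l\<^sup>2 * (u - t) / 2))"
proof -
  define A where "A k = {\<omega> \<in> space M. \<sigma> \<omega> = k}" for k
  have A: "A k \<in> sets M" if "k \<in> K" for k using \<sigma>(2)[OF that] sets_F_subset unfolding A_def by blast
  have tu: "t \<le> u" using K \<sigma>(1) not_empty by (meson ex_in_conv order_trans)
  have E: "(\<lambda>\<omega>. indicator (A k) \<omega> * ennreal (exp (l * (B v \<omega> - B t \<omega>)))) \<in> borel_measurable M"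
    if "k \<in> K" "t \<le> v" for k v
  proof -
    have "B v \<in> borel_measurable M" "B t \<in> borel_measurable M" using t that by auto
    then show ?thesis using A[OF that(1)] by measurable
  qed
  have split: "(\<Sum>k\<in>K. indicator (A k) \<omega> * g k) = g (\<sigma> \<omega>)" if "\<omega> \<in> space M" for \<omega> and g :: "real \<Rightarrow> ennreal"
  proof -
    have "(\<Sum>k\<in>K. indicator (A k) \<omega> * g k) = (\<Sum>k\<in>K. if k = \<sigma> \<omega> then g k else 0)"
      using that by (intro sum.cong) (auto simp: A_def)
    then show ?thesis using \<sigma>(1)[OF that] K(1) by simp
  qed
  have "(\<integral>\<^sup>+\<omega>. ennreal (exp (l * (B (\<sigma> \<omega>) \<omega> - B t \<omega>))) \<partial>M)
      = (\<integral>\<^sup>+\<omega>. (\<Sum>k\<in>K. indicator (A k) \<omega> * ennreal (exp (l * (B k \<omega> - B t \<omega>)))) \<partial>M)"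
    by (rule nn_integral_cong) (rule split[symmetric])
  also have "\<dots> = (\<Sum>k\<in>K. \<integral>\<^sup>+\<omega>. indicator (A k) \<omega> * ennreal (exp (l * (B k \<omega> - B t \<omega>))) \<partial>M)"
    using K E by (intro nn_integral_sum) auto
  also have "\<dots> \<le> (\<Sum>k\<in>K. \<integral>\<^sup>+\<omega>. indicator (A k) \<omega> * ennreal (exp (l * (B u \<omega> - B t \<omega>))) \<partial>M)"
    using K t \<sigma>(2) unfolding A_def by (intro sum_mono nn_integral_exp_increment_on_event_le) auto
  also have "\<dots> = (\<integral>\<^sup>+\<omega>. (\<Sum>k\<in>K. indicator (A k) \<omega> * ennreal (exp (l * (B u \<omega> - B t \<omega>)))) \<partial>M)"
    using K E tu by (intro nn_integral_sum[symmetric]) auto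
  also have "\<dots> = (\<integral>\<^sup>+\<omega>. ennreal (exp (l * (B u \<omega> - B t \<omega>))) \<partial>M)"
    by (rule nn_integral_cong) (rule split)
  also have "\<dots> = ennreal (exp (l\<^sup>2 * (u - t) / 2))" by (rule nn_integral_exp_increment[OF t tu])
  finally show ?thesis .
qed

text \<open>The dyadic values overshoot \<open>T\<close> by at most \<open>1 / 2 ^ n \<le> 1\<close>, whence \<open>T + 1\<close>.\<close>
lemma nn_integral_exp_dyadic_stopped_le:
  assumes \<tau>: "stopping_time F \<tau>" and t: "0 \<le> t" and bnd: "\<And>\<omega>. \<omega> \<in> space M \<Longrightarrow> t \<le> \<tau> \<omega> \<and> \<tau> \<omega> \<le> T"
  shows "(\<integral>\<^sup>+\<omega>. ennreal (exp (l * (B (dyadic_upper n t (\<tau> \<omega>)) \<omega> - B t \<omega>))) \<partial>M)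
    \<le> ennreal (exp (l\<^sup>2 * (T + 1 - t) / 2))"
proof -
  define c where "c \<omega> = \<lceil>(\<tau> \<omega> - t) * 2 ^ n\<rceil>" for \<omega>
  define N where "N = nat \<lceil>(T - t) * 2 ^ n\<rceil>"
  define K where "K = (\<lambda>k. t + real k / 2 ^ n) ` {0..N}"
  have "t \<le> T" using bnd not_empty by (meson ex_in_conv order_trans)
  then have T_t: "0 \<le> (T - t) * 2 ^ n" by simp
  have "t + real k / 2 ^ n \<le> T + 1" if "k \<le> N" for k
  proof -
    have "real k \<le> (T - t) * 2 ^ n + 1" using that T_t unfolding N_def by linarith
    then have "real k / 2 ^ n \<le> T - t + 1 / 2 ^ n" by (simp add: field_simps)
    also have "1 / 2 ^ n \<le> (1::real)" by simp
    finally show ?thesis by simp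
  qed
  then have K: "finite K" "\<And>k. k \<in> K \<Longrightarrow> t \<le> k \<and> k \<le> T + 1" unfolding K_def by auto
  have "dyadic_upper n t (\<tau> \<omega>) \<in> K" if "\<omega> \<in> space M" for \<omega>
  proof -
    have "0 \<le> (\<tau> \<omega> - t) * 2 ^ n" "(\<tau> \<omega> - t) * 2 ^ n \<le> (T - t) * 2 ^ n" using bnd[OF that] by auto
    then have "0 \<le> c \<omega>" "c \<omega> \<le> \<lceil>(T - t) * 2 ^ n\<rceil>" unfolding c_def by (auto intro: ceiling_mono)
    then show ?thesis using T_t unfolding K_def N_def dyadic_upper_def c_def[symmetric]
      by (intro image_eqI[of _ _ "nat (c \<omega>)"]) (auto simp: nat_le_iff)
  qed
  moreover have "{\<omega> \<in> space M. dyadic_upper n t (\<tau> \<omega>) = k} \<in> sets (F k)" if "k \<in> K" for k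
  proof -
    obtain j where k: "k = t + real j / 2 ^ n" using \<open>k \<in> K\<close> unfolding K_def by blast
    have "dyadic_upper n t (\<tau> \<omega>) = k \<longleftrightarrow> c \<omega> = int j" for \<omega>
      unfolding dyadic_upper_def c_def[symmetric] k by simp (metis of_int_eq_iff of_int_of_nat_eq)
    also have "c \<omega> = int j \<longleftrightarrow> \<tau> \<omega> \<le> k \<and> \<not> \<tau> \<omega> \<le> k - 1 / 2 ^ n" for \<omega>
      unfolding c_def k by (rule ceiling_mult_eq_iff) simp
    moreover have "Measurable.pred (F k) (\<lambda>\<omega>. \<tau> \<omega> \<le> k \<and> \<not> \<tau> \<omega> \<le> k - 1 / 2 ^ n)"
      using \<tau> by (intro pred_intros_logic stopping_timeD stopping_time_le_const) auto
    ultimately show ?thesis by (simp add: Measurable.pred_def space_F)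
  qed
  ultimately show ?thesis using K by (intro nn_integral_exp_finite_valued_le[OF t]) auto
qed

text \<open>Fatou's lemma along the dyadic approximations from above, which converge by continuity of
  the paths.\<close>
lemma nn_integral_exp_stopped_le:
  assumes \<tau>: "stopping_time F \<tau>" and t: "0 \<le> t" and bnd: "\<And>\<omega>. \<omega> \<in> space M \<Longrightarrow> t \<le> \<tau> \<omega> \<and> \<tau> \<omega> \<le> T"
  shows "(\<integral>\<^sup>+\<omega>. ennreal (exp (l * (B (\<tau> \<omega>) \<omega> - B t \<omega>))) \<partial>M) \<le> ennreal (exp (l\<^sup>2 * (T + 1 - t) / 2))"
proof -
  define V where "V n \<omega> = ennreal (exp (l * (B (dyadic_upper n t (\<tau> \<omega>)) \<omega> - B t \<omega>)))" for n \<omega>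
  have nonneg: "0 \<le> dyadic_upper n t (\<tau> \<omega>)" if "\<omega> \<in> space M" for n \<omega>
    using bnd[OF that] t dyadic_upper_ge[of "\<tau> \<omega>" n t] by linarith
  have V_M: "V n \<in> borel_measurable M" for n
  proof -
    have "(\<lambda>\<omega>. dyadic_upper n t (\<tau> \<omega>)) \<in> borel_measurable M"
      unfolding dyadic_upper_def using measurable_stopping_time_M[OF \<tau>] by measurable
    then have "(\<lambda>\<omega>. B (dyadic_upper n t (\<tau> \<omega>)) \<omega>) \<in> borel_measurable M"
      using nonneg by (rule measurable_B_at)
    then show ?thesis unfolding V_def using t by measurable
  qed
  have V_lim: "(\<lambda>n. V n \<omega>) \<longlonglongrightarrow> ennreal (exp (l * (B (\<tau> \<omega>) \<omega> - B t \<omega>)))" if \<omega>: "\<omega> \<in> space M" for \<omega>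
  proof -
    have "(\<lambda>n. B (dyadic_upper n t (\<tau> \<omega>)) \<omega>) \<longlonglongrightarrow> B (\<tau> \<omega>) \<omega>"
      using bnd[OF \<omega>] t nonneg[OF \<omega>]
      by (intro continuous_on_tendsto_compose[OF continuous_on_B[OF \<omega>] dyadic_upper_tendsto]) auto
    then show ?thesis unfolding V_def by (intro tendsto_ennrealI tendsto_intros)
  qed
  have "(\<integral>\<^sup>+\<omega>. ennreal (exp (l * (B (\<tau> \<omega>) \<omega> - B t \<omega>))) \<partial>M) = (\<integral>\<^sup>+\<omega>. liminf (\<lambda>n. V n \<omega>) \<partial>M)"
    by (intro nn_integral_cong lim_imp_Liminf[symmetric] V_lim) auto
  also have "\<dots> \<le> liminf (\<lambda>n. integral\<^sup>N M (V n))" by (rule nn_integral_liminf[OF V_M])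
  also have "\<dots> \<le> limsup (\<lambda>n. integral\<^sup>N M (V n))" by (rule Liminf_le_Limsup) simp
  also have "\<dots> \<le> ennreal (exp (l\<^sup>2 * (T + 1 - t) / 2))"
    unfolding V_def using nn_integral_exp_dyadic_stopped_le[OF assms] by (intro Limsup_bounded) auto
  finally show ?thesis .
qed

lemma integrable_exp_stopped:
  assumes \<tau>: "stopping_time F \<tau>" and t: "0 \<le> t" and bnd: "\<And>\<omega>. \<omega> \<in> space M \<Longrightarrow> t \<le> \<tau> \<omega> \<and> \<tau> \<omega> \<le> T"
  shows "integrable M (\<lambda>\<omega>. exp (l * (B (\<tau> \<omega>) \<omega> - B t \<omega>)))"
    and "(\<integral>\<omega>. exp (l * (B (\<tau> \<omega>) \<omega> - B t \<omega>)) \<partial>M) \<le> exp (l\<^sup>2 * (T + 1 - t) / 2)"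
proof -
  have "(\<lambda>\<omega>. B (\<tau> \<omega>) \<omega>) \<in> borel_measurable M"
    using measurable_stopping_time_M[OF \<tau>] bnd t by (intro measurable_B_at) force+
  then have m: "(\<lambda>\<omega>. exp (l * (B (\<tau> \<omega>) \<omega> - B t \<omega>))) \<in> borel_measurable M" using t by measurable
  note bound = nn_integral_exp_stopped_le[OF assms, of l]
  show int: "integrable M (\<lambda>\<omega>. exp (l * (B (\<tau> \<omega>) \<omega> - B t \<omega>)))"
    using bound by (intro integrableI_bounded[OF m]) (auto simp: order_le_less_trans)
  have "ennreal (\<integral>\<omega>. exp (l * (B (\<tau> \<omega>) \<omega> - B t \<omega>)) \<partial>M) \<le> ennreal (exp (l\<^sup>2 * (T + 1 - t) / 2))"
    using bound by (subst nn_integral_eq_integral[OF int, symmetric]) auto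
  then show "(\<integral>\<omega>. exp (l * (B (\<tau> \<omega>) \<omega> - B t \<omega>)) \<partial>M) \<le> exp (l\<^sup>2 * (T + 1 - t) / 2)"
    by (subst (asm) ennreal_le_iff) auto
qed

text \<open>No measurability of \<open>e\<close> is needed: a non-integrable function has integral \<open>0\<close>.\<close>
lemma integral_integral_le_exp_path:
  assumes ab: "0 \<le> a" "a \<le> b" "b - a \<le> L" and K: "0 \<le> K"
    and e: "\<And>u \<omega>. u \<in> {a..b} \<Longrightarrow> \<omega> \<in> space M \<Longrightarrow> 0 \<le> e u \<omega> \<and> e u \<omega> \<le> K * exp (l * (B u \<omega> - B a \<omega>))"
  shows "(\<integral>\<omega>. integral {a..b} (\<lambda>u. e u \<omega>) \<partial>M) \<le> K * (L * exp (l\<^sup>2 * L / 2))"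
proof -
  define G where "G \<omega> = integral {a..b} (\<lambda>u. exp (l * (B u \<omega> - B a \<omega>)))" for \<omega>
  have G0: "0 \<le> G \<omega>" for \<omega> unfolding G_def by (rule integral_nonneg_unconditional) simp
  have le_G: "integral {a..b} (\<lambda>u. e u \<omega>) \<le> K * G \<omega>" if \<omega>: "\<omega> \<in> space M" for \<omega>
  proof (cases "(\<lambda>u. e u \<omega>) integrable_on {a..b}")
    case True
    have "continuous_on {a..b} (\<lambda>u. K * exp (l * (B u \<omega> - B a \<omega>)))"
      using continuous_on_B_Icc[OF ab(1) \<omega>] by (intro continuous_intros)
    then have "integral {a..b} (\<lambda>u. e u \<omega>) \<le> integral {a..b} (\<lambda>u. K * exp (l * (B u \<omega> - B a \<omega>)))"
      using e \<omega> by (intro integral_le[OF True] integrable_continuous_interval) auto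
    then show ?thesis unfolding G_def by simp
  qed (use G0 K in \<open>simp add: not_integrable_integral\<close>)
  have "(\<integral>\<omega>. integral {a..b} (\<lambda>u. e u \<omega>) \<partial>M) \<le> K * ((b - a) * exp (l\<^sup>2 * (b - a) / 2))"
  proof (cases "integrable M (\<lambda>\<omega>. integral {a..b} (\<lambda>u. e u \<omega>))")
    case True
    have "(\<integral>\<omega>. integral {a..b} (\<lambda>u. e u \<omega>) \<partial>M) \<le> (\<integral>\<omega>. K * G \<omega> \<partial>M)"
      using integrable_integral_exp_path(1)[OF ab(1,2)] le_G unfolding G_def
      by (intro integral_mono[OF True]) auto
    also have "\<dots> \<le> K * ((b - a) * exp (l\<^sup>2 * (b - a) / 2))"
      using integrable_integral_exp_path(2)[OF ab(1,2)] K unfolding G_def by (simp add: mult_left_mono)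
    finally show ?thesis .
  qed (use ab K in \<open>simp add: not_integrable_integral_eq\<close>)
  also have "\<dots> \<le> K * (L * exp (l\<^sup>2 * L / 2))"
    using ab K by (intro mult_left_mono mult_mono) (auto intro!: divide_right_mono mult_left_mono)
  finally show ?thesis .
qed

end

section \<open>Homogeneity and bounds of the model ingredients\<close>

lemma Zproc_mult: "Zproc \<rho> r \<theta> Mf B a (z * y) s \<omega> = z * Zproc \<rho> r \<theta> Mf B a y s \<omega>"
  unfolding Zproc_def by simp

lemma Zproc_pos: "0 < y \<Longrightarrow> 0 < Zproc \<rho> r \<theta> Mf B a y s \<omega>"
  unfolding Zproc_def by simp

lemma Zproc_powr:
  "Zproc \<rho> r \<theta> Mf B a 1 s \<omega> powr p
    = exp (p * (integral {a..s} (\<lambda>u. \<rho> - r + Mf u) - \<theta>\<^sup>2 / 2 * (s - a))) * exp (- p * \<theta> * (B s \<omega> - B a \<omega>))"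
  unfolding Zproc_def by (simp add: powr_def exp_add[symmetric] algebra_simps)

lemma drift_factor_le:
  fixes p \<rho> r \<theta> a s L :: real and Mf :: "real \<Rightarrow> real"
  assumes p: "p \<le> 0" and s: "a \<le> s" "s - a \<le> L" and Mf: "\<And>v. 0 \<le> Mf v"
  shows "exp (p * (integral {a..s} (\<lambda>u. \<rho> - r + Mf u) - \<theta>\<^sup>2 / 2 * (s - a)))
    \<le> exp (- p * (\<bar>\<rho> - r\<bar> + \<theta>\<^sup>2 / 2) * L)"
proof -
  have "- \<bar>\<rho> - r\<bar> * L \<le> integral {a..s} (\<lambda>u. \<rho> - r + Mf u)"
    by (rule integral_const_plus_nonneg_ge[OF s]) (rule Mf)
  moreover have "\<theta>\<^sup>2 / 2 * (s - a) \<le> \<theta>\<^sup>2 / 2 * L" using s by (intro mult_left_mono) auto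
  ultimately have "- \<bar>\<rho> - r\<bar> * L - \<theta>\<^sup>2 / 2 * L \<le> integral {a..s} (\<lambda>u. \<rho> - r + Mf u) - \<theta>\<^sup>2 / 2 * (s - a)"
    by linarith
  from mult_left_mono_neg[OF this p] show ?thesis by (simp add: algebra_simps)
qed

lemma uhat_eq_powr:
  assumes "0 < \<alpha>" "0 < y"
  shows "uhat \<alpha> y h = (1 - \<alpha>) * (1 / \<alpha>) powr (\<alpha> / (\<alpha> - 1)) * y powr (\<alpha> / (\<alpha> - 1)) * h"
  using assms unfolding uhat_def by (simp add: powr_mult[symmetric] divide_inverse mult_ac)

lemma uhat_mult:
  assumes "0 < \<alpha>" "0 < z" "0 < y"
  shows "uhat \<alpha> (z * y) h = z powr (\<alpha> / (\<alpha> - 1)) * uhat \<alpha> y h"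
  using assms by (simp add: uhat_eq_powr powr_mult)

lemma uhat_nonneg: "\<alpha> \<le> 1 \<Longrightarrow> 0 \<le> h \<Longrightarrow> 0 \<le> uhat \<alpha> z h"
  unfolding uhat_def by simp

lemma disc_pos: "0 < disc \<rho> Mf a s"
  unfolding disc_def by simp

lemma disc_le_1:
  assumes "0 \<le> \<rho>" "\<And>v. 0 \<le> Mf v"
  shows "disc \<rho> Mf a s \<le> 1"
proof -
  have "0 \<le> integral {a..s} (\<lambda>u. \<rho> + Mf u)"
    using assms by (intro integral_nonneg_unconditional add_nonneg_nonneg)
  then show ?thesis unfolding disc_def by simp
qed

lemma continuous_on_disc: "continuous_on {a..b} Mf \<Longrightarrow> continuous_on {a..b} (disc \<rho> Mf a)"
  unfolding disc_def by (intro continuous_intros continuous_on_integral_Icc)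

lemma mort_nonneg: "0 \<le> m0 \<Longrightarrow> 0 \<le> m1 \<Longrightarrow> 0 \<le> mort m0 m1 \<kappa> x"
  unfolding mort_def by simp

lemma H2_bounds:
  assumes "s \<le> u" "0 \<le> h" "0 < \<delta>" "0 \<le> fI"
  shows "0 \<le> H2 \<delta> fI s h u" "H2 \<delta> fI s h u \<le> h + fI / \<delta>"
proof -
  have e: "0 < exp (- \<delta> * (u - s))" "exp (- \<delta> * (u - s)) \<le> 1" using assms by auto
  then show "0 \<le> H2 \<delta> fI s h u" unfolding H2_def using assms by simp
  have "h * exp (- \<delta> * (u - s)) \<le> h" using e assms(2) by (simp add: mult_left_le)
  moreover have "fI / \<delta> * (1 - exp (- \<delta> * (u - s))) \<le> fI / \<delta>" using e assms by (intro mult_left_le) auto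
  ultimately show "H2 \<delta> fI s h u \<le> h + fI / \<delta>" unfolding H2_def by linarith
qed

lemma Wfun_mult:
  assumes "0 < \<alpha>" "0 < z" "0 < y"
  shows "Wfun M B T r \<mu> \<sigma> \<rho> m0 m1 \<kappa> \<delta> \<alpha> fI s (z * y) h
    = z powr (\<alpha> / (\<alpha> - 1)) * Wfun M B T r \<mu> \<sigma> \<rho> m0 m1 \<kappa> \<delta> \<alpha> fI s y h"
  using assms unfolding Wfun_def Let_def Zproc_mult by (simp add: uhat_mult Zproc_pos mult.left_commute)

lemma Wfun_nonneg:
  assumes "\<alpha> \<le> 1" "0 \<le> h" "0 < \<delta>" "0 \<le> fI"
  shows "0 \<le> Wfun M B T r \<mu> \<sigma> \<rho> m0 m1 \<kappa> \<delta> \<alpha> fI s y h"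
  unfolding Wfun_def Let_def
  using assms H2_bounds(1) disc_pos
  by (intro Bochner_Integration.integral_nonneg integral_nonneg_unconditional mult_nonneg_nonneg uhat_nonneg)
    (auto intro: less_imp_le)

lemma Wfun_at_T: "Wfun M B T r \<mu> \<sigma> \<rho> m0 m1 \<kappa> \<delta> \<alpha> fI T y h = 0"
  unfolding Wfun_def Let_def by simp

section \<open>The stopping problem\<close>

locale dual_stopping_problem = filtered_brownian_motion +
  fixes T r \<mu> \<sigma> \<rho> m0 m1 \<kappa> \<delta> \<alpha> I fI t h :: real
  assumes \<rho>: "0 \<le> \<rho>" and m0: "0 \<le> m0" and m1: "0 \<le> m1" and \<delta>: "0 < \<delta>"
    and \<alpha>: "0 < \<alpha>" "\<alpha> < 1" and r: "0 < r" and I: "0 \<le> I" and fI: "0 \<le> fI"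
    and t: "0 \<le> t" "t < T" and h: "0 < h"
begin

abbreviation "\<theta> \<equiv> (\<mu> - r) / \<sigma>"
abbreviation "p \<equiv> \<alpha> / (\<alpha> - 1)"
abbreviation "\<eta> \<equiv> - p * \<theta>"
abbreviation "H \<equiv> H1 \<delta> t h"
abbreviation "M1 \<equiv> \<lambda>u. mort m0 m1 \<kappa> (H u)"
abbreviation "W \<equiv> Wfun M B T r \<mu> \<sigma> \<rho> m0 m1 \<kappa> \<delta> \<alpha> fI"
abbreviation "Y \<equiv> Zproc \<rho> r \<theta> M1 B t 1"

definition "uhat_coeff = (1 - \<alpha>) * (1 / \<alpha>) powr p"
definition "drift_bound = exp (- p * (\<bar>\<rho> - r\<bar> + \<theta>\<^sup>2 / 2) * (T - t))"
definition "W_bound = uhat_coeff * drift_bound * (h + fI / \<delta>) * ((T - t) * exp (\<eta>\<^sup>2 * (T - t) / 2))"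
definition "rate s = uhat_coeff * disc \<rho> M1 t s * H s
  * exp (p * (integral {t..s} (\<lambda>u. \<rho> - r + M1 u) - \<theta>\<^sup>2 / 2 * (s - t)))"

lemma p_neg: "p < 0"
  using \<alpha> by (simp add: divide_pos_neg)

lemma uhat_coeff_pos: "0 < uhat_coeff"
  unfolding uhat_coeff_def using \<alpha> by simp

lemma drift_bound_pos: "0 < drift_bound"
  unfolding drift_bound_def by simp

lemma W_bound_nonneg: "0 \<le> W_bound"
  unfolding W_bound_def using uhat_coeff_pos drift_bound_pos h fI \<delta> t by simp

lemma H_pos: "0 < H s"
  unfolding H1_def using h by simp

lemma H_le: "t \<le> s \<Longrightarrow> H s \<le> h"
  unfolding H1_def using h \<delta> by (simp add: mult_le_cancel_left1)

lemma M1_nonneg: "0 \<le> M1 u"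
  using m0 m1 by (rule mort_nonneg)

lemma continuous_on_H: "continuous_on A H"
  unfolding H1_def by (intro continuous_intros)

lemma continuous_on_M1: "continuous_on A M1"
  unfolding mort_def H1_def using h by (intro continuous_intros) auto

lemma disc_uhat_Zproc_le:
  assumes s: "t \<le> s" "s \<le> u" "u \<le> T" and Mf: "\<And>v. 0 \<le> Mf v" and Hv: "0 \<le> Hv"
  shows "disc \<rho> Mf s u * uhat \<alpha> (Zproc \<rho> r \<theta> Mf B s 1 u \<omega>) Hv
    \<le> uhat_coeff * drift_bound * Hv * exp (\<eta> * (B u \<omega> - B s \<omega>))"
proof -
  define D where "D = exp (p * (integral {s..u} (\<lambda>v. \<rho> - r + Mf v) - \<theta>\<^sup>2 / 2 * (u - s)))"
  have "disc \<rho> Mf s u * uhat \<alpha> (Zproc \<rho> r \<theta> Mf B s 1 u \<omega>) Hv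
      = (disc \<rho> Mf s u * (uhat_coeff * Hv * D)) * exp (\<eta> * (B u \<omega> - B s \<omega>))"
    using \<alpha> by (simp add: uhat_eq_powr Zproc_pos Zproc_powr uhat_coeff_def D_def mult_ac)
  also have "\<dots> \<le> (1 * (uhat_coeff * Hv * drift_bound)) * exp (\<eta> * (B u \<omega> - B s \<omega>))"
  proof (intro mult_right_mono mult_mono mult_left_mono)
    show "D \<le> drift_bound" unfolding drift_bound_def D_def using p_neg s Mf by (intro drift_factor_le) auto
    show "disc \<rho> Mf s u \<le> 1" using \<rho> Mf by (rule disc_le_1)
  qed (use uhat_coeff_pos Hv in \<open>auto simp: D_def\<close>)
  finally show ?thesis by (simp add: mult_ac)
qed

lemma running_reward_eq:
  "disc \<rho> M1 t s * uhat \<alpha> (Y s \<omega>) (H s) = rate s * exp (\<eta> * (B s \<omega> - B t \<omega>))"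
  using \<alpha> by (simp add: uhat_eq_powr Zproc_pos Zproc_powr rate_def uhat_coeff_def mult_ac)

lemma rate_pos: "0 < rate s"
  unfolding rate_def using uhat_coeff_pos disc_pos H_pos by simp

lemma continuous_on_rate: "continuous_on {t..T} rate"
  unfolding rate_def
  by (intro continuous_intros continuous_on_disc continuous_on_integral_Icc continuous_on_M1 continuous_on_H)

lemma Y_powr_le: "t \<le> s \<Longrightarrow> s \<le> T \<Longrightarrow> Y s \<omega> powr p \<le> drift_bound * exp (\<eta> * (B s \<omega> - B t \<omega>))"
  unfolding Zproc_powr drift_bound_def using p_neg M1_nonneg
  by (intro mult_right_mono drift_factor_le) auto

lemma W_le:
  assumes s: "t \<le> s" "s \<le> T" and hh: "0 < hh" "hh \<le> h"
  shows "W s 1 hh \<le> W_bound"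
proof -
  define M2 where "M2 u = mort m0 m1 \<kappa> (H2 \<delta> fI s hh u)" for u
  have M2: "0 \<le> M2 v" for v unfolding M2_def using m0 m1 by (rule mort_nonneg)
  have H2: "0 \<le> H2 \<delta> fI s hh u" "H2 \<delta> fI s hh u \<le> h + fI / \<delta>" if "s \<le> u" for u
    using H2_bounds[OF that _ \<delta> fI, of hh] hh by auto
  have "W s 1 hh = (\<integral>\<omega>. integral {s..T} (\<lambda>u. disc \<rho> M2 s u * uhat \<alpha> (Zproc \<rho> r \<theta> M2 B s 1 u \<omega>) (H2 \<delta> fI s hh u)) \<partial>M)"
    unfolding Wfun_def Let_def M2_def ..
  also have "\<dots> \<le> (uhat_coeff * drift_bound * (h + fI / \<delta>)) * ((T - t) * exp (\<eta>\<^sup>2 * (T - t) / 2))"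
  proof (rule integral_integral_le_exp_path)
    fix u \<omega> assume u: "u \<in> {s..T}"
    have "disc \<rho> M2 s u * uhat \<alpha> (Zproc \<rho> r \<theta> M2 B s 1 u \<omega>) (H2 \<delta> fI s hh u)
        \<le> uhat_coeff * drift_bound * H2 \<delta> fI s hh u * exp (\<eta> * (B u \<omega> - B s \<omega>))"
      using s u M2 H2 by (intro disc_uhat_Zproc_le) auto
    also have "\<dots> \<le> uhat_coeff * drift_bound * (h + fI / \<delta>) * exp (\<eta> * (B u \<omega> - B s \<omega>))"
      using u H2 uhat_coeff_pos drift_bound_pos by (intro mult_right_mono mult_left_mono) auto
    moreover have "0 \<le> disc \<rho> M2 s u * uhat \<alpha> (Zproc \<rho> r \<theta> M2 B s 1 u \<omega>) (H2 \<delta> fI s hh u)"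
      using u H2 \<alpha> disc_pos[THEN less_imp_le] by (intro mult_nonneg_nonneg uhat_nonneg) auto
    ultimately show "0 \<le> disc \<rho> M2 s u * uhat \<alpha> (Zproc \<rho> r \<theta> M2 B s 1 u \<omega>) (H2 \<delta> fI s hh u) \<and>
        disc \<rho> M2 s u * uhat \<alpha> (Zproc \<rho> r \<theta> M2 B s 1 u \<omega>) (H2 \<delta> fI s hh u)
        \<le> uhat_coeff * drift_bound * (h + fI / \<delta>) * exp (\<eta> * (B u \<omega> - B s \<omega>))"
      by simp
  qed (use s t uhat_coeff_pos drift_bound_pos h fI \<delta> in auto)
  finally show ?thesis unfolding W_bound_def .
qed

definition reward :: "('a \<Rightarrow> real) \<Rightarrow> real \<Rightarrow> 'a \<Rightarrow> real" where
  "reward \<tau> z \<omega> =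
     integral {t..\<tau> \<omega>} (\<lambda>s. disc \<rho> M1 t s * uhat \<alpha> (Zproc \<rho> r \<theta> M1 B t z s \<omega>) (H s))
     + disc \<rho> M1 t (\<tau> \<omega>) * (W (\<tau> \<omega>) (Zproc \<rho> r \<theta> M1 B t z (\<tau> \<omega>) \<omega>) (H (\<tau> \<omega>))
        - Zproc \<rho> r \<theta> M1 B t z (\<tau> \<omega>) \<omega> * gfun T r I (\<tau> \<omega>))"

definition powr_coeff :: "('a \<Rightarrow> real) \<Rightarrow> 'a \<Rightarrow> real" where
  "powr_coeff \<tau> \<omega> = integral {t..\<tau> \<omega>} (\<lambda>s. rate s * exp (\<eta> * (B s \<omega> - B t \<omega>)))
     + disc \<rho> M1 t (\<tau> \<omega>) * W (\<tau> \<omega>) (Y (\<tau> \<omega>) \<omega>) (H (\<tau> \<omega>))"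

definition lin_coeff :: "('a \<Rightarrow> real) \<Rightarrow> 'a \<Rightarrow> real" where
  "lin_coeff \<tau> \<omega> = disc \<rho> M1 t (\<tau> \<omega>) * Y (\<tau> \<omega>) \<omega> * gfun T r I (\<tau> \<omega>)"

definition powr_coeff_majorant :: "('a \<Rightarrow> real) \<Rightarrow> 'a \<Rightarrow> real" where
  "powr_coeff_majorant \<tau> \<omega> = uhat_coeff * drift_bound * h * integral {t..T} (\<lambda>s. exp (\<eta> * (B s \<omega> - B t \<omega>)))
     + W_bound * drift_bound * exp (\<eta> * (B (\<tau> \<omega>) \<omega> - B t \<omega>))"

definition "powr_coeff_bound = uhat_coeff * drift_bound * h * ((T - t) * exp (\<eta>\<^sup>2 * (T - t) / 2))
  + W_bound * drift_bound * exp (\<eta>\<^sup>2 * (T + 1 - t) / 2)"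

lemma Jfun_eq_SUP:
  "Jfun M F B T r \<mu> \<sigma> \<rho> m0 m1 \<kappa> \<delta> \<alpha> I fI t z h = (SUP \<tau>\<in>stopping_times_in M F t T. \<integral>\<omega>. reward \<tau> z \<omega> \<partial>M)"
  unfolding Jfun_def Let_def reward_def ..

lemma reward_eq:
  assumes z: "0 < z"
  shows "reward \<tau> z \<omega> = z powr p * powr_coeff \<tau> \<omega> - z * lin_coeff \<tau> \<omega>"
proof -
  have Z: "Zproc \<rho> r \<theta> M1 B t z s \<omega> = z * Y s \<omega>" for s
    using Zproc_mult[of \<rho> r \<theta> M1 B t z 1 s \<omega>] by simp
  have "disc \<rho> M1 t s * uhat \<alpha> (Zproc \<rho> r \<theta> M1 B t z s \<omega>) (H s) = z powr p * (rate s * exp (\<eta> * (B s \<omega> - B t \<omega>)))" for s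
    using running_reward_eq[of s \<omega>] \<alpha> z by (simp add: Z uhat_mult Zproc_pos)
  moreover have "W (\<tau> \<omega>) (Zproc \<rho> r \<theta> M1 B t z (\<tau> \<omega>) \<omega>) (H (\<tau> \<omega>)) = z powr p * W (\<tau> \<omega>) (Y (\<tau> \<omega>) \<omega>) (H (\<tau> \<omega>))"
    unfolding Z using \<alpha> z by (intro Wfun_mult Zproc_pos) auto
  ultimately show ?thesis
    unfolding reward_def powr_coeff_def lin_coeff_def by (simp add: Z algebra_simps)
qed

lemma stopping_times_inD:
  assumes "\<tau> \<in> stopping_times_in M F t T"
  shows "stopping_time F \<tau>" and "\<And>\<omega>. \<omega> \<in> space M \<Longrightarrow> t \<le> \<tau> \<omega> \<and> \<tau> \<omega> \<le> T"
  using assms unfolding stopping_times_in_def by auto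

lemma measurable_lin_coeff:
  assumes \<tau>: "\<tau> \<in> stopping_times_in M F t T"
  shows "lin_coeff \<tau> \<in> borel_measurable M"
proof -
  note range = stopping_times_inD(2)[OF \<tau>]
  have \<tau>_M: "\<tau> \<in> borel_measurable M" using measurable_stopping_time_M stopping_times_inD(1)[OF \<tau>] .
  have "continuous_on {t..T} (disc \<rho> M1 t)" "continuous_on {t..T} (\<lambda>s. integral {t..s} (\<lambda>u. \<rho> - r + M1 u))"
    "continuous_on {t..T} (gfun T r I)"
    unfolding gfun_def by (intro continuous_intros continuous_on_disc continuous_on_integral_Icc continuous_on_M1)+
  then have "(\<lambda>\<omega>. disc \<rho> M1 t (\<tau> \<omega>)) \<in> borel_measurable M"
    "(\<lambda>\<omega>. integral {t..\<tau> \<omega>} (\<lambda>u. \<rho> - r + M1 u)) \<in> borel_measurable M"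
    "(\<lambda>\<omega>. gfun T r I (\<tau> \<omega>)) \<in> borel_measurable M"
    using range by (auto intro!: measurable_continuous_on_compose[OF _ \<tau>_M])
  moreover have "(\<lambda>\<omega>. B (\<tau> \<omega>) \<omega>) \<in> borel_measurable M"
    using \<tau>_M range t by (intro measurable_B_at) force+
  ultimately show ?thesis
    unfolding lin_coeff_def Zproc_def using \<tau>_M t by measurable
qed

lemma lin_coeff_nonneg:
  assumes "\<tau> \<in> stopping_times_in M F t T" "\<omega> \<in> space M"
  shows "0 \<le> lin_coeff \<tau> \<omega>"
proof -
  have "0 \<le> gfun T r I (\<tau> \<omega>)"
    using stopping_times_inD(2)[OF assms] r I unfolding gfun_def by (simp add: mult_le_cancel_left1)
  then show ?thesis
    unfolding lin_coeff_def using disc_pos[of \<rho> M1 t "\<tau> \<omega>"] Zproc_pos[OF zero_less_one, of \<rho> r \<theta> M1 B t "\<tau> \<omega>" \<omega>]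
    by simp
qed

lemma powr_coeff_nonneg:
  assumes "\<tau> \<in> stopping_times_in M F t T" "\<omega> \<in> space M"
  shows "0 \<le> powr_coeff \<tau> \<omega>"
  unfolding powr_coeff_def
  using rate_pos[THEN less_imp_le] disc_pos[THEN less_imp_le] H_pos[THEN less_imp_le] \<alpha> \<delta> fI
  by (intro add_nonneg_nonneg integral_nonneg_unconditional mult_nonneg_nonneg Wfun_nonneg) auto

lemma running_reward_le:
  assumes s: "t \<le> s" "s \<le> T" and \<omega>: "\<omega> \<in> space M"
  shows "integral {t..s} (\<lambda>u. rate u * exp (\<eta> * (B u \<omega> - B t \<omega>)))
    \<le> uhat_coeff * drift_bound * h * integral {t..T} (\<lambda>u. exp (\<eta> * (B u \<omega> - B t \<omega>)))"
proof -
  define f where "f = (\<lambda>u. rate u * exp (\<eta> * (B u \<omega> - B t \<omega>)))"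
  have f: "continuous_on {t..T} f" unfolding f_def
    using continuous_on_B_Icc[OF t(1) \<omega>] by (intro continuous_intros continuous_on_rate)
  have "integral {t..s} f \<le> integral {t..T} f"
    using s rate_pos[THEN less_imp_le]
    by (intro integral_subset_le integrable_continuous_interval continuous_on_subset[OF f]) (auto simp: f_def)
  also have "\<dots> \<le> integral {t..T} (\<lambda>u. uhat_coeff * drift_bound * h * exp (\<eta> * (B u \<omega> - B t \<omega>)))"
  proof (intro integral_le integrable_continuous_interval f)
    show "continuous_on {t..T} (\<lambda>u. uhat_coeff * drift_bound * h * exp (\<eta> * (B u \<omega> - B t \<omega>)))"
      using continuous_on_B_Icc[OF t(1) \<omega>] by (intro continuous_intros)
    fix u assume u: "u \<in> {t..T}"
    have "f u \<le> uhat_coeff * drift_bound * H u * exp (\<eta> * (B u \<omega> - B t \<omega>))"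
      unfolding f_def running_reward_eq[symmetric] using u M1_nonneg H_pos[THEN less_imp_le]
      by (intro disc_uhat_Zproc_le) auto
    also have "\<dots> \<le> uhat_coeff * drift_bound * h * exp (\<eta> * (B u \<omega> - B t \<omega>))"
      using u H_le uhat_coeff_pos drift_bound_pos by (intro mult_right_mono mult_left_mono) auto
    finally show "f u \<le> uhat_coeff * drift_bound * h * exp (\<eta> * (B u \<omega> - B t \<omega>))" .
  qed
  finally show ?thesis unfolding f_def by simp
qed

lemma continuation_le:
  assumes s: "t \<le> s" "s \<le> T"
  shows "disc \<rho> M1 t s * W s (Y s \<omega>) (H s) \<le> W_bound * drift_bound * exp (\<eta> * (B s \<omega> - B t \<omega>))"
proof -
  have "W s (Y s \<omega>) (H s) = Y s \<omega> powr p * W s 1 (H s)"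
    using Wfun_mult[OF \<alpha>(1) Zproc_pos[OF zero_less_one] zero_less_one] by simp
  also have "\<dots> \<le> (drift_bound * exp (\<eta> * (B s \<omega> - B t \<omega>))) * W_bound"
    using s H_pos H_pos[THEN less_imp_le] H_le \<alpha> \<delta> fI drift_bound_pos
    by (intro mult_mono Y_powr_le W_le Wfun_nonneg) auto
  finally have "disc \<rho> M1 t s * W s (Y s \<omega>) (H s) \<le> 1 * ((drift_bound * exp (\<eta> * (B s \<omega> - B t \<omega>))) * W_bound)"
    using disc_le_1[OF \<rho> M1_nonneg] H_pos[THEN less_imp_le] \<alpha> \<delta> fI
    by (intro mult_mono Wfun_nonneg) auto
  then show ?thesis by (simp only: mult_1_left mult_ac)
qed

lemma powr_coeff_le_majorant:
  assumes "\<tau> \<in> stopping_times_in M F t T" and \<omega>: "\<omega> \<in> space M"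
  shows "powr_coeff \<tau> \<omega> \<le> powr_coeff_majorant \<tau> \<omega>"
  unfolding powr_coeff_def powr_coeff_majorant_def
  using stopping_times_inD(2)[OF assms] \<omega> by (intro add_mono running_reward_le continuation_le) auto

lemma integrable_powr_coeff_majorant:
  assumes \<tau>: "\<tau> \<in> stopping_times_in M F t T"
  shows "integrable M (powr_coeff_majorant \<tau>)" "integral\<^sup>L M (powr_coeff_majorant \<tau>) \<le> powr_coeff_bound"
proof -
  note path = integrable_integral_exp_path[OF t(1) less_imp_le[OF t(2)], of \<eta>]
  note stopped = integrable_exp_stopped[OF stopping_times_inD(1)[OF \<tau>] t(1) stopping_times_inD(2)[OF \<tau>], of \<eta>]
  show int: "integrable M (powr_coeff_majorant \<tau>)"
    unfolding powr_coeff_majorant_def[abs_def] using path(1) stopped(1) by simp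
  have "integral\<^sup>L M (powr_coeff_majorant \<tau>)
      = uhat_coeff * drift_bound * h * (\<integral>\<omega>. integral {t..T} (\<lambda>s. exp (\<eta> * (B s \<omega> - B t \<omega>))) \<partial>M)
        + W_bound * drift_bound * (\<integral>\<omega>. exp (\<eta> * (B (\<tau> \<omega>) \<omega> - B t \<omega>)) \<partial>M)"
    unfolding powr_coeff_majorant_def[abs_def] using path(1) stopped(1) by simp
  also have "\<dots> \<le> powr_coeff_bound"
    unfolding powr_coeff_bound_def using path(2) stopped(2) uhat_coeff_pos drift_bound_pos h W_bound_nonneg
    by (intro add_mono mult_left_mono) auto
  finally show "integral\<^sup>L M (powr_coeff_majorant \<tau>) \<le> powr_coeff_bound" .
qed

lemma expected_reward_form:
  assumes \<tau>: "\<tau> \<in> stopping_times_in M F t T"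
  shows "\<exists>A b. 0 \<le> A \<and> A \<le> powr_coeff_bound \<and> 0 \<le> b \<and>
    (\<forall>z>0. (\<integral>\<omega>. reward \<tau> z \<omega> \<partial>M) = z powr p * A - z * b)"
proof -
  obtain A b where A: "0 \<le> A" "A \<le> integral\<^sup>L M (powr_coeff_majorant \<tau>)" and b: "0 \<le> b"
    and eq: "\<And>a z. 0 < a \<Longrightarrow> 0 < z \<Longrightarrow> (\<integral>\<omega>. a * powr_coeff \<tau> \<omega> - z * lin_coeff \<tau> \<omega> \<partial>M) = a * A - z * b"
    using integral_diff_scaled_eq[of "powr_coeff \<tau>" "powr_coeff_majorant \<tau>" "lin_coeff \<tau>"]
      powr_coeff_nonneg[OF \<tau>] powr_coeff_le_majorant[OF \<tau>] integrable_powr_coeff_majorant(1)[OF \<tau>]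
      measurable_lin_coeff[OF \<tau>] lin_coeff_nonneg[OF \<tau>]
    by blast
  have "(\<integral>\<omega>. reward \<tau> z \<omega> \<partial>M) = z powr p * A - z * b" if "0 < z" for z
    using eq[of "z powr p" z] that by (simp add: reward_eq)
  then show ?thesis
    using A b integrable_powr_coeff_majorant(2)[OF \<tau>] by (intro exI[of _ A] exI[of _ b]) auto
qed

lemma const_T_in_stopping_times: "(\<lambda>_. T) \<in> stopping_times_in M F t T"
  unfolding stopping_times_in_def using stopping_time_const t by auto

lemma expected_reward_T_pos:
  assumes z: "0 < z"
  shows "0 < (\<integral>\<omega>. reward (\<lambda>_. T) z \<omega> \<partial>M)"
proof -
  have coeff: "powr_coeff (\<lambda>_. T) \<omega> = integral {t..T} (\<lambda>s. rate s * exp (\<eta> * (B s \<omega> - B t \<omega>)))" for \<omega>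
    unfolding powr_coeff_def Wfun_at_T by simp
  have reward_T: "reward (\<lambda>_. T) z \<omega> = z powr p * powr_coeff (\<lambda>_. T) \<omega>" for \<omega>
    unfolding reward_eq[OF z] lin_coeff_def gfun_def by simp
  have pos: "0 < powr_coeff (\<lambda>_. T) \<omega>" if \<omega>: "\<omega> \<in> space M" for \<omega>
  proof -
    have "continuous_on {t..T} (\<lambda>s. rate s * exp (\<eta> * (B s \<omega> - B t \<omega>)))"
      using continuous_on_B_Icc[OF t(1) \<omega>] by (intro continuous_intros continuous_on_rate)
    then have "integral {t..T} (\<lambda>_. 0) < integral {t..T} (\<lambda>s. rate s * exp (\<eta> * (B s \<omega> - B t \<omega>)))"
      using t rate_pos by (intro integral_less_real) auto
    then show ?thesis unfolding coeff by simp
  qed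
  have "powr_coeff (\<lambda>_. T) \<in> borel_measurable M"
    unfolding coeff[abs_def] using t(1) continuous_on_rate by (rule measurable_integral_exp_path)
  moreover have "norm (powr_coeff (\<lambda>_. T) \<omega>) \<le> norm (powr_coeff_majorant (\<lambda>_. T) \<omega>)" if "\<omega> \<in> space M" for \<omega>
    using powr_coeff_nonneg[OF const_T_in_stopping_times that] powr_coeff_le_majorant[OF const_T_in_stopping_times that] by simp
  ultimately have "integrable M (powr_coeff (\<lambda>_. T))"
    by (intro Bochner_Integration.integrable_bound[OF integrable_powr_coeff_majorant(1)[OF const_T_in_stopping_times]] AE_I2)
  then have "0 < integral\<^sup>L M (powr_coeff (\<lambda>_. T))"
    using pos by (intro expectation_greater) auto
  then show ?thesis unfolding reward_T using z by simp
qed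

end

theorem proposition5p1:
  fixes M :: "'a measure" and F :: "real \<Rightarrow> 'a measure" and B :: "real \<Rightarrow> 'a \<Rightarrow> real"
    and T r \<mu> \<sigma> \<rho> m0 m1 \<kappa> \<delta> \<alpha> I fI t h :: real
  assumes "usual_filtration M F" and "F_brownian_motion M F B"
    and "T > 0" and "r > 0" and "\<sigma> > 0" and "\<rho> > 0" and "m0 \<ge> 0" and "m1 \<ge> 0"
    and "\<kappa> > 0" and "\<delta> > 0" and "0 < \<alpha>" and "\<alpha> < 1" and "I > 0" and "fI > 0"
    and "0 \<le> t" and "t < T" and "h > 0"
  shows "strictly_convex_on {0<..} (\<lambda>z. Jfun M F B T r \<mu> \<sigma> \<rho> m0 m1 \<kappa> \<delta> \<alpha> I fI t z h)"
proof -
  interpret dual_stopping_problem M F B T r \<mu> \<sigma> \<rho> m0 m1 \<kappa> \<delta> \<alpha> I fI t h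
    by unfold_locales (use assms in auto)
  show ?thesis
    unfolding Jfun_eq_SUP
  proof (rule strictly_convex_on_SUP[OF strictly_convex_on_powr_neg[OF p_neg], where C = powr_coeff_bound])
    show "0 < z powr p" if "0 < z" for z
      using that by simp
    show "stopping_times_in M F t T \<noteq> {}"
      using const_T_in_stopping_times by blast
    show "\<exists>A b. 0 \<le> A \<and> A \<le> powr_coeff_bound \<and> 0 \<le> b \<and>
        (\<forall>z>0. (\<integral>\<omega>. reward \<tau> z \<omega> \<partial>M) = z powr p * A - z * b)"
      if "\<tau> \<in> stopping_times_in M F t T" for \<tau>
      using that by (rule expected_reward_form)
    show "\<exists>\<tau>\<in>stopping_times_in M F t T. 0 < (\<integral>\<omega>. reward \<tau> z \<omega> \<partial>M)" if "0 < z" for z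
      using const_T_in_stopping_times expected_reward_T_pos[OF that] by blast
  qed
qed

end
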